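(* Let $\{S_i\mid i\in I\}$ be a collection of semigroups and let $F=\prod^{*}\{S_i\mid i\in I\}$ be their semigroup free product. Then $F^1$ is weakly right coherent if and only if each $S_i^1$ ($i\in I$) is weakly right coherent.
   Context: For a semigroup $S$, $S^1$ denotes $S$ if $S$ is a monoid and otherwise $S$ with an identity adjoined. A monoid $M$ is weakly right coherent (WRC) if every finitely generated right ideal of $M$ is finitely presented as a right $M$-act (known to be equivalent to: $M$ is right ideal Howson, i.e. the intersection of any two finitely generated right ideals is finitely generated, and finitely right equated, i.e. every $\mathbf{r}_M(a)=\{(s,t)\mid as=at\}$ is finitely generated as a right congruence). The semigroup free product of pairwise disjoint semigroups $S_i$ consists of sequences $s_1*\dots*s_n$ with $s_j\in\bigsqcup S_i$ and consecutive entries from different $S_i$, multiplied by concatenation, multiplying the two adjacent entries if they lie in the same $S_i$. *)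

theory Defs
  imports "HOL-Algebra.Group"
begin

(* A semigroup: carrier closed under an associative multiplication (the "one" field is ignored). *)
definition is_semigroup :: "('a, 'b) monoid_scheme \<Rightarrow> bool" where
  "is_semigroup S \<longleftrightarrow>
     (\<forall>x\<in>carrier S. \<forall>y\<in>carrier S. x \<otimes>\<^bsub>S\<^esub> y \<in> carrier S) \<and>
     (\<forall>x\<in>carrier S. \<forall>y\<in>carrier S. \<forall>z\<in>carrier S.
        (x \<otimes>\<^bsub>S\<^esub> y) \<otimes>\<^bsub>S\<^esub> z = x \<otimes>\<^bsub>S\<^esub> (y \<otimes>\<^bsub>S\<^esub> z))"

definition is_identity :: "('a, 'b) monoid_scheme \<Rightarrow> 'a \<Rightarrow> bool" where
  "is_identity S e \<longleftrightarrow> e \<in> carrier S \<and>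
     (\<forall>x\<in>carrier S. e \<otimes>\<^bsub>S\<^esub> x = x \<and> x \<otimes>\<^bsub>S\<^esub> e = x)"

(* S^1: S itself if S has an identity, otherwise S with an adjoined identity (None). *)
definition adjoin_one :: "('a, 'b) monoid_scheme \<Rightarrow> 'a option monoid" where
  "adjoin_one S =
     \<lparr> carrier = (if \<exists>e. is_identity S e then Some ` carrier S
                  else insert None (Some ` carrier S)),
       mult = (\<lambda>x y. case x of None \<Rightarrow> y
                  | Some a \<Rightarrow> (case y of None \<Rightarrow> x | Some b \<Rightarrow> Some (a \<otimes>\<^bsub>S\<^esub> b))),
       one = (if \<exists>e. is_identity S e then Some (SOME e. is_identity S e) else None) \<rparr>"

(* Semigroup free product of the family S i (i \<in> I); the components are made disjoint by
   tagging elements with their index. *)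
definition fp_carrier :: "('i \<Rightarrow> ('a, 'b) monoid_scheme) \<Rightarrow> 'i set \<Rightarrow> ('i \<times> 'a) list set" where
  "fp_carrier S I = {xs. xs \<noteq> [] \<and> (\<forall>p\<in>set xs. fst p \<in> I \<and> snd p \<in> carrier (S (fst p))) \<and>
       (\<forall>k. Suc k < length xs \<longrightarrow> fst (xs ! k) \<noteq> fst (xs ! Suc k))}"

definition fp_mult :: "('i \<Rightarrow> ('a, 'b) monoid_scheme) \<Rightarrow> ('i \<times> 'a) list \<Rightarrow> ('i \<times> 'a) list \<Rightarrow> ('i \<times> 'a) list" where
  "fp_mult S xs ys =
     (if xs \<noteq> [] \<and> ys \<noteq> [] \<and> fst (last xs) = fst (hd ys)
      then butlast xs @ [(fst (hd ys), snd (last xs) \<otimes>\<^bsub>S (fst (hd ys))\<^esub> snd (hd ys))] @ tl ys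
      else xs @ ys)"

definition free_product :: "('i \<Rightarrow> ('a, 'b) monoid_scheme) \<Rightarrow> 'i set \<Rightarrow> ('i \<times> 'a) list monoid" where
  "free_product S I = \<lparr> carrier = fp_carrier S I, mult = fp_mult S, one = [] \<rparr>"

definition right_ideal :: "('a, 'b) monoid_scheme \<Rightarrow> 'a set \<Rightarrow> bool" where
  "right_ideal M R \<longleftrightarrow> R \<subseteq> carrier M \<and> (\<forall>r\<in>R. \<forall>s\<in>carrier M. r \<otimes>\<^bsub>M\<^esub> s \<in> R)"

definition fg_right_ideal :: "('a, 'b) monoid_scheme \<Rightarrow> 'a set \<Rightarrow> bool" where
  "fg_right_ideal M R \<longleftrightarrow>
     (\<exists>X. finite X \<and> X \<subseteq> carrier M \<and> R = {x \<otimes>\<^bsub>M\<^esub> s | x s. x \<in> X \<and> s \<in> carrier M})"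

(* Free right M-act on n generators: {0..<n} \<times> M, action (i,m)\<cdot>s = (i, m s). *)
definition free_act :: "('a, 'b) monoid_scheme \<Rightarrow> nat \<Rightarrow> (nat \<times> 'a) set" where
  "free_act M n = {0..<n} \<times> carrier M"

definition right_cong_free :: "('a, 'b) monoid_scheme \<Rightarrow> nat \<Rightarrow> ((nat \<times> 'a) \<times> (nat \<times> 'a)) set \<Rightarrow> bool" where
  "right_cong_free M n \<rho> \<longleftrightarrow> equiv (free_act M n) \<rho> \<and>
     (\<forall>x y s. (x, y) \<in> \<rho> \<longrightarrow> s \<in> carrier M \<longrightarrow>
        ((fst x, snd x \<otimes>\<^bsub>M\<^esub> s), (fst y, snd y \<otimes>\<^bsub>M\<^esub> s)) \<in> \<rho>)"

definition cong_gen_free :: "('a, 'b) monoid_scheme \<Rightarrow> nat \<Rightarrow> ((nat \<times> 'a) \<times> (nat \<times> 'a)) set \<Rightarrow> ((nat \<times> 'a) \<times> (nat \<times> 'a)) set" where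
  "cong_gen_free M n H = \<Inter> {\<rho>. right_cong_free M n \<rho> \<and> H \<subseteq> \<rho>}"

definition fg_right_cong_free :: "('a, 'b) monoid_scheme \<Rightarrow> nat \<Rightarrow> ((nat \<times> 'a) \<times> (nat \<times> 'a)) set \<Rightarrow> bool" where
  "fg_right_cong_free M n \<rho> \<longleftrightarrow>
     (\<exists>H. finite H \<and> H \<subseteq> free_act M n \<times> free_act M n \<and> \<rho> = cong_gen_free M n H)"

(* A right ideal R is finitely presented as a right M-act: R \<cong> F_n / \<rho> with \<rho> finitely
   generated, i.e. there are generators a_0..a_{n-1} of R such that the kernel of the
   canonical surjection F_n \<rightarrow> R, (i,s) \<mapsto> a_i s, is a finitely generated right congruence. *)
definition fp_right_ideal :: "('a, 'b) monoid_scheme \<Rightarrow> 'a set \<Rightarrow> bool" where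
  "fp_right_ideal M R \<longleftrightarrow>
     (\<exists>as. set as \<subseteq> R \<and>
        R = {as ! i \<otimes>\<^bsub>M\<^esub> s | i s. i < length as \<and> s \<in> carrier M} \<and>
        fg_right_cong_free M (length as)
          {(x, y). x \<in> free_act M (length as) \<and> y \<in> free_act M (length as) \<and>
                   as ! fst x \<otimes>\<^bsub>M\<^esub> snd x = as ! fst y \<otimes>\<^bsub>M\<^esub> snd y})"

definition weakly_right_coherent :: "('a, 'b) monoid_scheme \<Rightarrow> bool" where
  "weakly_right_coherent M \<longleftrightarrow>
     (\<forall>R. right_ideal M R \<longrightarrow> fg_right_ideal M R \<longrightarrow> fp_right_ideal M R)"

end

theory Submission
  imports Defs
begin

text \<open>A monoid is weakly right coherent if and only if it is finitely right equated and the
  intersection of any two principal right ideals is finitely generated, and both conditions pass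
  to retracts.  Each \<open>S\<^sub>i\<^sup>1\<close> is a retract of \<open>F\<^sup>1\<close>: project a word onto the product of its
  letters from \<open>S\<^sub>i\<close>.  Conversely, if \<open>F\<close> has an identity then \<open>F\<^sup>1 \<cong> S\<^sub>k\<^sup>1\<close> for its only
  nonempty factor.  Otherwise, multiplying a word \<open>u x\<close> with last letter \<open>x \<in> S\<^sub>i\<close> on the right
  only changes \<open>x\<close>, by the leading \<open>S\<^sub>i\<close>-letter of the multiplier, and appends the rest; so the
  right annihilator congruences and the principal right ideals of \<open>F\<^sup>1\<close> are read off from those
  of the \<open>S\<^sub>i\<^sup>1\<close>.\<close>

section \<open>Right congruences on free acts\<close>

lemma free_act_iff: "x \<in> free_act M n \<longleftrightarrow> fst x < n \<and> snd x \<in> carrier M"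
  by (cases x) (auto simp: free_act_def)

lemma right_cong_free_subset: "right_cong_free M n \<rho> \<Longrightarrow> \<rho> \<subseteq> free_act M n \<times> free_act M n"
  unfolding right_cong_free_def equiv_def refl_on_def by blast

lemma right_cong_free_refl: "right_cong_free M n \<rho> \<Longrightarrow> x \<in> free_act M n \<Longrightarrow> (x, x) \<in> \<rho>"
  unfolding right_cong_free_def equiv_def refl_on_def by blast

lemma right_cong_free_sym: "right_cong_free M n \<rho> \<Longrightarrow> (x, y) \<in> \<rho> \<Longrightarrow> (y, x) \<in> \<rho>"
  unfolding right_cong_free_def equiv_def sym_def by blast

lemma right_cong_free_trans:
  "right_cong_free M n \<rho> \<Longrightarrow> (x, y) \<in> \<rho> \<Longrightarrow> (y, z) \<in> \<rho> \<Longrightarrow> (x, z) \<in> \<rho>"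
  unfolding right_cong_free_def equiv_def trans_def by blast

lemma right_cong_free_act:
  "right_cong_free M n \<rho> \<Longrightarrow> ((i, s), (j, t)) \<in> \<rho> \<Longrightarrow> w \<in> carrier M \<Longrightarrow>
    ((i, s \<otimes>\<^bsub>M\<^esub> w), (j, t \<otimes>\<^bsub>M\<^esub> w)) \<in> \<rho>"
  unfolding right_cong_free_def by (metis fst_conv snd_conv)

lemma right_cong_freeI:
  assumes "\<rho> \<subseteq> free_act M n \<times> free_act M n"
    and "\<And>x. x \<in> free_act M n \<Longrightarrow> (x, x) \<in> \<rho>"
    and "\<And>x y. (x, y) \<in> \<rho> \<Longrightarrow> (y, x) \<in> \<rho>"
    and "\<And>x y z. (x, y) \<in> \<rho> \<Longrightarrow> (y, z) \<in> \<rho> \<Longrightarrow> (x, z) \<in> \<rho>"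
    and "\<And>x y s. (x, y) \<in> \<rho> \<Longrightarrow> s \<in> carrier M \<Longrightarrow>
           ((fst x, snd x \<otimes>\<^bsub>M\<^esub> s), (fst y, snd y \<otimes>\<^bsub>M\<^esub> s)) \<in> \<rho>"
  shows "right_cong_free M n \<rho>"
  unfolding right_cong_free_def equiv_def refl_on_def sym_def trans_def
  using assms by blast

lemma right_cong_free_cong_gen:
  assumes M: "monoid M" and H: "H \<subseteq> free_act M n \<times> free_act M n"
  shows "right_cong_free M n (cong_gen_free M n H)"
proof -
  let ?F = "{\<rho>. right_cong_free M n \<rho> \<and> H \<subseteq> \<rho>}"
  have "right_cong_free M n (free_act M n \<times> free_act M n)"
    using M by (intro right_cong_freeI) (auto simp: free_act_iff monoid.m_closed)
  then have "free_act M n \<times> free_act M n \<in> ?F" using H by blast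
  then show ?thesis
    unfolding cong_gen_free_def
  proof (intro right_cong_freeI)
    fix x y z s
    show "(x, z) \<in> \<Inter> ?F" if "(x, y) \<in> \<Inter> ?F" "(y, z) \<in> \<Inter> ?F"
      using that right_cong_free_trans by blast
    show "((fst x, snd x \<otimes>\<^bsub>M\<^esub> s), (fst y, snd y \<otimes>\<^bsub>M\<^esub> s)) \<in> \<Inter> ?F"
      if "(x, y) \<in> \<Inter> ?F" "s \<in> carrier M"
      using that unfolding right_cong_free_def by blast
  qed (use right_cong_free_refl right_cong_free_sym in blast)+
qed

lemma cong_gen_free_least: "right_cong_free M n \<rho> \<Longrightarrow> H \<subseteq> \<rho> \<Longrightarrow> cong_gen_free M n H \<subseteq> \<rho>"
  unfolding cong_gen_free_def by blast

lemma cong_gen_free_incl: "H \<subseteq> cong_gen_free M n H"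
  unfolding cong_gen_free_def by blast

lemma cong_gen_free_map:
  assumes M: "monoid M"
    and H: "H \<subseteq> free_act M n \<times> free_act M n"
    and \<rho>: "right_cong_free M' n' \<rho>"
    and \<theta>: "\<And>x. x \<in> free_act M n \<Longrightarrow> \<theta> x \<in> free_act M' n'"
    and \<theta>_act: "\<And>x s. x \<in> free_act M n \<Longrightarrow> s \<in> carrier M \<Longrightarrow>
        \<theta> (fst x, snd x \<otimes>\<^bsub>M\<^esub> s) = (fst (\<theta> x), snd (\<theta> x) \<otimes>\<^bsub>M'\<^esub> g s) \<and> g s \<in> carrier M'"
    and H\<rho>: "\<And>x y. (x, y) \<in> H \<Longrightarrow> (\<theta> x, \<theta> y) \<in> \<rho>"
    and xy: "(x, y) \<in> cong_gen_free M n H"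
  shows "(\<theta> x, \<theta> y) \<in> \<rho>"
proof -
  let ?P = "{(x, y). x \<in> free_act M n \<and> y \<in> free_act M n \<and> (\<theta> x, \<theta> y) \<in> \<rho>}"
  have "right_cong_free M n ?P"
  proof (rule right_cong_freeI)
    fix x y s assume xy: "(x, y) \<in> ?P" and s: "s \<in> carrier M"
    then have "x \<in> free_act M n" "y \<in> free_act M n" by auto
    moreover have "((fst (\<theta> x), snd (\<theta> x) \<otimes>\<^bsub>M'\<^esub> g s), (fst (\<theta> y), snd (\<theta> y) \<otimes>\<^bsub>M'\<^esub> g s)) \<in> \<rho>"
    proof (rule right_cong_free_act[OF \<rho>])
      show "((fst (\<theta> x), snd (\<theta> x)), (fst (\<theta> y), snd (\<theta> y))) \<in> \<rho>" using xy by simp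
      show "g s \<in> carrier M'" using \<theta>_act s \<open>x \<in> free_act M n\<close> by blast
    qed
    ultimately show "((fst x, snd x \<otimes>\<^bsub>M\<^esub> s), (fst y, snd y \<otimes>\<^bsub>M\<^esub> s)) \<in> ?P"
      using s M \<theta>_act by (auto simp: free_act_iff monoid.m_closed)
  next
    show "?P \<subseteq> free_act M n \<times> free_act M n" by auto
  next
    fix x assume "x \<in> free_act M n"
    then show "(x, x) \<in> ?P" using \<theta> right_cong_free_refl[OF \<rho>] by blast
  next
    fix x y assume "(x, y) \<in> ?P"
    then show "(y, x) \<in> ?P" using right_cong_free_sym[OF \<rho>] by blast
  next
    fix x y z assume "(x, y) \<in> ?P" "(y, z) \<in> ?P"
    then show "(x, z) \<in> ?P" using right_cong_free_trans[OF \<rho>, of "\<theta> x" "\<theta> y" "\<theta> z"] by blast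
  qed
  moreover have "H \<subseteq> ?P" using H H\<rho> by auto
  ultimately show ?thesis using cong_gen_free_least xy by blast
qed

lemma cong_gen_free_into_coordinate:
  assumes M: "monoid M" and G: "G \<subseteq> free_act M 1 \<times> free_act M 1"
    and \<rho>: "right_cong_free M n \<rho>" and i: "i < n"
    and G\<rho>: "\<And>x y. (x, y) \<in> G \<Longrightarrow> ((i, snd x), (i, snd y)) \<in> \<rho>"
    and st: "((0, s), (0, t)) \<in> cong_gen_free M 1 G"
  shows "((i, s), (i, t)) \<in> \<rho>"
proof -
  define \<theta> where "\<theta> z = (i, snd z)" for z :: "nat \<times> 'a"
  have "(\<theta> (0, s), \<theta> (0, t)) \<in> \<rho>"
    by (rule cong_gen_free_map[OF M G \<rho> _ _ _ st, where g = id])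
       (auto simp: free_act_iff i G\<rho> \<theta>_def)
  then show ?thesis by (simp add: \<theta>_def)
qed

section \<open>Kernels of presentations and finitely generated right ideals\<close>

definition act_kernel :: "('a, 'b) monoid_scheme \<Rightarrow> 'a list \<Rightarrow> ((nat \<times> 'a) \<times> (nat \<times> 'a)) set" where
  "act_kernel M as = {(x, y). x \<in> free_act M (length as) \<and> y \<in> free_act M (length as) \<and>
                        as ! fst x \<otimes>\<^bsub>M\<^esub> snd x = as ! fst y \<otimes>\<^bsub>M\<^esub> snd y}"

definition right_ideal_span :: "('a, 'b) monoid_scheme \<Rightarrow> 'a set \<Rightarrow> 'a set" where
  "right_ideal_span M X = {x \<otimes>\<^bsub>M\<^esub> s | x s. x \<in> X \<and> s \<in> carrier M}"

lemma act_kernel_singleton: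
  "(x, y) \<in> act_kernel M [a] \<longleftrightarrow> fst x = 0 \<and> fst y = 0 \<and> snd x \<in> carrier M \<and> snd y \<in> carrier M \<and>
     a \<otimes>\<^bsub>M\<^esub> snd x = a \<otimes>\<^bsub>M\<^esub> snd y"
  unfolding act_kernel_def by (auto simp: free_act_iff)

lemma right_cong_free_act_kernel:
  assumes M: "monoid M" and as: "set as \<subseteq> carrier M"
  shows "right_cong_free M (length as) (act_kernel M as)"
proof (rule right_cong_freeI)
  fix x y s assume xy: "(x, y) \<in> act_kernel M as" and s: "s \<in> carrier M"
  have "as ! fst x \<in> carrier M" "as ! fst y \<in> carrier M"
    using xy as unfolding act_kernel_def by (auto simp: free_act_iff)
  then show "((fst x, snd x \<otimes>\<^bsub>M\<^esub> s), (fst y, snd y \<otimes>\<^bsub>M\<^esub> s)) \<in> act_kernel M as"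
    using xy s M unfolding act_kernel_def
    by (auto simp: free_act_iff monoid.m_closed simp flip: monoid.m_assoc)
qed (auto simp: act_kernel_def)

lemma fg_act_kernelI:
  assumes M: "monoid M" and as: "set as \<subseteq> carrier M"
    and H: "finite H" "H \<subseteq> act_kernel M as"
    and gen: "act_kernel M as \<subseteq> cong_gen_free M (length as) H"
  shows "fg_right_cong_free M (length as) (act_kernel M as)"
proof -
  have "cong_gen_free M (length as) H \<subseteq> act_kernel M as"
    using cong_gen_free_least[OF right_cong_free_act_kernel[OF M as] H(2)] .
  moreover have "H \<subseteq> free_act M (length as) \<times> free_act M (length as)"
    using H(2) unfolding act_kernel_def by auto
  ultimately show ?thesis
    unfolding fg_right_cong_free_def using H(1) gen by blast
qed

lemma right_ideal_spanI: "x \<in> X \<Longrightarrow> s \<in> carrier M \<Longrightarrow> x \<otimes>\<^bsub>M\<^esub> s \<in> right_ideal_span M X"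
  unfolding right_ideal_span_def by blast

lemma right_ideal_spanE:
  assumes "z \<in> right_ideal_span M X"
  obtains x s where "x \<in> X" "s \<in> carrier M" "z = x \<otimes>\<^bsub>M\<^esub> s"
  using assms unfolding right_ideal_span_def by blast

lemma right_ideal_span_incl:
  "monoid M \<Longrightarrow> X \<subseteq> carrier M \<Longrightarrow> X \<subseteq> right_ideal_span M X"
proof
  fix x assume "monoid M" "X \<subseteq> carrier M" "x \<in> X"
  then show "x \<in> right_ideal_span M X"
    using right_ideal_spanI[of x X "\<one>\<^bsub>M\<^esub>" M] by (simp add: subsetD monoid.r_one)
qed

lemma right_ideal_span_mult:
  assumes M: "monoid M" and X: "X \<subseteq> carrier M"
    and z: "z \<in> right_ideal_span M X" and s: "s \<in> carrier M"
  shows "z \<otimes>\<^bsub>M\<^esub> s \<in> right_ideal_span M X"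
proof -
  obtain x t where "x \<in> X" "t \<in> carrier M" "z = x \<otimes>\<^bsub>M\<^esub> t" using z by (rule right_ideal_spanE)
  then show ?thesis
    using right_ideal_spanI[of x X "t \<otimes>\<^bsub>M\<^esub> s" M] X M s
    by (auto simp: monoid.m_assoc monoid.m_closed subsetD)
qed

lemma right_ideal_span_singleton:
  "z \<in> right_ideal_span M {a} \<longleftrightarrow> (\<exists>s\<in>carrier M. z = a \<otimes>\<^bsub>M\<^esub> s)"
  unfolding right_ideal_span_def by blast

lemma right_ideal_Int: "right_ideal M R \<Longrightarrow> right_ideal M R' \<Longrightarrow> right_ideal M (R \<inter> R')"
  unfolding right_ideal_def by blast

lemma right_ideal_span_mono: "X \<subseteq> Y \<Longrightarrow> right_ideal_span M X \<subseteq> right_ideal_span M Y"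
  unfolding right_ideal_span_def by blast

lemma right_ideal_span_least:
  assumes "right_ideal M R" "X \<subseteq> R"
  shows "right_ideal_span M X \<subseteq> R"
  using assms unfolding right_ideal_def right_ideal_span_def by blast

lemma right_ideal_span_right_ideal:
  assumes M: "monoid M" and X: "X \<subseteq> carrier M"
  shows "right_ideal M (right_ideal_span M X)"
  unfolding right_ideal_def
  using right_ideal_span_mult[OF M X] X M
  by (auto simp: right_ideal_span_def monoid.m_closed)

lemma right_ideal_span_singleton_subset:
  assumes M: "monoid M" and a: "a \<in> carrier M" and b: "b \<in> right_ideal_span M {a}"
  shows "right_ideal_span M {b} \<subseteq> right_ideal_span M {a}"
  using right_ideal_span_least[OF right_ideal_span_right_ideal[OF M]] a b by simp

lemma right_ideal_span_set:
  "right_ideal_span M (set as) = {as ! i \<otimes>\<^bsub>M\<^esub> s | i s. i < length as \<and> s \<in> carrier M}"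
  unfolding right_ideal_span_def by (auto simp: in_set_conv_nth)

lemma right_ideal_span_set_factor:
  assumes bs: "set bs \<subseteq> right_ideal_span M (set as)"
  obtains f u where
    "\<forall>l<length bs. f l < length as \<and> u l \<in> carrier M \<and> bs ! l = as ! f l \<otimes>\<^bsub>M\<^esub> u l"
proof -
  have "\<forall>l. \<exists>p. l < length bs \<longrightarrow>
      fst p < length as \<and> snd p \<in> carrier M \<and> bs ! l = as ! fst p \<otimes>\<^bsub>M\<^esub> snd p"
    using bs nth_mem unfolding right_ideal_span_set by fastforce
  from choice[OF this] obtain F where
    "\<forall>l<length bs. fst (F l) < length as \<and> snd (F l) \<in> carrier M \<and>
       bs ! l = as ! fst (F l) \<otimes>\<^bsub>M\<^esub> snd (F l)"
    by blast
  then show ?thesis by (intro that[of "fst \<circ> F" "snd \<circ> F"]) simp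
qed

section \<open>Weak right coherence as an equated and a Howson condition\<close>

text \<open>\<open>act_kernel M [a]\<close> is the right congruence \<open>r\<^sub>M(a)\<close> of the paper, transported to the
  free act of rank one.\<close>

definition finitely_right_equated :: "('a, 'b) monoid_scheme \<Rightarrow> bool" where
  "finitely_right_equated M \<longleftrightarrow> (\<forall>a\<in>carrier M. fg_right_cong_free M 1 (act_kernel M [a]))"

definition fg_principal_meet :: "('a, 'b) monoid_scheme \<Rightarrow> 'a \<Rightarrow> 'a \<Rightarrow> bool" where
  "fg_principal_meet M a b \<longleftrightarrow> (\<exists>X. finite X \<and> X \<subseteq> carrier M \<and>
      right_ideal_span M {a} \<inter> right_ideal_span M {b} = right_ideal_span M X)"

definition principal_right_ideal_Howson :: "('a, 'b) monoid_scheme \<Rightarrow> bool" where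
  "principal_right_ideal_Howson M \<longleftrightarrow> (\<forall>a\<in>carrier M. \<forall>b\<in>carrier M. fg_principal_meet M a b)"

lemma fg_principal_meet_commute: "fg_principal_meet M a b \<longleftrightarrow> fg_principal_meet M b a"
  unfolding fg_principal_meet_def by (simp add: Int_commute)

lemma fg_principal_meet_nested:
  assumes "b \<in> carrier M" "right_ideal_span M {b} \<subseteq> right_ideal_span M {a}"
  shows "fg_principal_meet M a b"
  unfolding fg_principal_meet_def using assms by (intro exI[of _ "{b}"]) auto

lemma fg_principal_meet_disjoint:
  "right_ideal_span M {a} \<inter> right_ideal_span M {b} = {} \<Longrightarrow> fg_principal_meet M a b"
  unfolding fg_principal_meet_def by (intro exI[of _ "{}"]) (simp add: right_ideal_span_def)

lemma principal_right_ideal_Howson_witnesses: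
  assumes M: "monoid M" and H: "principal_right_ideal_Howson M"
    and a: "a \<in> carrier M" and b: "b \<in> carrier M"
  shows "\<exists>W. finite W \<and> W \<subseteq> carrier M \<times> carrier M \<and> (\<forall>(u, v)\<in>W. a \<otimes>\<^bsub>M\<^esub> u = b \<otimes>\<^bsub>M\<^esub> v) \<and>
    (\<forall>s\<in>carrier M. \<forall>t\<in>carrier M. a \<otimes>\<^bsub>M\<^esub> s = b \<otimes>\<^bsub>M\<^esub> t \<longrightarrow>
       (\<exists>(u, v)\<in>W. \<exists>w\<in>carrier M. a \<otimes>\<^bsub>M\<^esub> s = a \<otimes>\<^bsub>M\<^esub> (u \<otimes>\<^bsub>M\<^esub> w)))"
proof -
  obtain X where X: "finite X" "X \<subseteq> carrier M"
    and X_eq: "right_ideal_span M {a} \<inter> right_ideal_span M {b} = right_ideal_span M X"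
    using H a b unfolding principal_right_ideal_Howson_def fg_principal_meet_def by meson
  have "\<forall>c\<in>X. \<exists>p. fst p \<in> carrier M \<and> snd p \<in> carrier M \<and> c = a \<otimes>\<^bsub>M\<^esub> fst p \<and> c = b \<otimes>\<^bsub>M\<^esub> snd p"
  proof
    fix c assume "c \<in> X"
    then have "c \<in> right_ideal_span M {a} \<inter> right_ideal_span M {b}"
      using right_ideal_span_incl[OF M X(2)] X_eq by blast
    then obtain u v where "u \<in> carrier M" "v \<in> carrier M" "c = a \<otimes>\<^bsub>M\<^esub> u" "c = b \<otimes>\<^bsub>M\<^esub> v"
      by (blast elim: right_ideal_spanE)
    then show "\<exists>p. fst p \<in> carrier M \<and> snd p \<in> carrier M \<and> c = a \<otimes>\<^bsub>M\<^esub> fst p \<and> c = b \<otimes>\<^bsub>M\<^esub> snd p"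
      by (intro exI[of _ "(u, v)"]) simp
  qed
  then obtain f where f: "\<forall>c\<in>X. fst (f c) \<in> carrier M \<and> snd (f c) \<in> carrier M \<and>
      c = a \<otimes>\<^bsub>M\<^esub> fst (f c) \<and> c = b \<otimes>\<^bsub>M\<^esub> snd (f c)"
    by (rule bchoice[THEN exE])
  have "\<exists>(u, v)\<in>f ` X. \<exists>w\<in>carrier M. a \<otimes>\<^bsub>M\<^esub> s = a \<otimes>\<^bsub>M\<^esub> (u \<otimes>\<^bsub>M\<^esub> w)"
    if st: "s \<in> carrier M" "t \<in> carrier M" "a \<otimes>\<^bsub>M\<^esub> s = b \<otimes>\<^bsub>M\<^esub> t" for s t
  proof -
    have "a \<otimes>\<^bsub>M\<^esub> s \<in> right_ideal_span M X"
      unfolding X_eq[symmetric]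
      using st right_ideal_spanI[of a "{a}" s M] right_ideal_spanI[of b "{b}" t M] by simp
    then obtain c w where c: "c \<in> X" "w \<in> carrier M" "a \<otimes>\<^bsub>M\<^esub> s = c \<otimes>\<^bsub>M\<^esub> w"
      by (rule right_ideal_spanE)
    moreover have "c = a \<otimes>\<^bsub>M\<^esub> fst (f c)" "fst (f c) \<in> carrier M" using f c(1) by auto
    ultimately have "a \<otimes>\<^bsub>M\<^esub> s = a \<otimes>\<^bsub>M\<^esub> (fst (f c) \<otimes>\<^bsub>M\<^esub> w)"
      using a M c(2) by (metis monoid.m_assoc)
    then show ?thesis using c by (intro bexI[of _ "f c"]) auto
  qed
  moreover have "f ` X \<subseteq> carrier M \<times> carrier M"
    using f by (intro image_subsetI) (simp add: mem_Times_iff)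
  moreover have "\<forall>(u, v)\<in>f ` X. a \<otimes>\<^bsub>M\<^esub> u = b \<otimes>\<^bsub>M\<^esub> v"
    using f by (simp add: case_prod_beta)
  moreover have "finite (f ` X)" using X by simp
  ultimately show ?thesis by (intro exI[of _ "f ` X"]) blast
qed

lemma act_kernel_subset_right_cong:
  assumes M: "monoid M" and as: "set as \<subseteq> carrier M" and \<rho>: "right_cong_free M (length as) \<rho>"
    and coordinate: "\<And>i s t. i < length as \<Longrightarrow> s \<in> carrier M \<Longrightarrow> t \<in> carrier M \<Longrightarrow>
        as ! i \<otimes>\<^bsub>M\<^esub> s = as ! i \<otimes>\<^bsub>M\<^esub> t \<Longrightarrow> ((i, s), (i, t)) \<in> \<rho>"
    and meet: "\<And>i j s t. i < length as \<Longrightarrow> j < length as \<Longrightarrow> s \<in> carrier M \<Longrightarrow> t \<in> carrier M \<Longrightarrow>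
        as ! i \<otimes>\<^bsub>M\<^esub> s = as ! j \<otimes>\<^bsub>M\<^esub> t \<Longrightarrow>
        \<exists>u v w. u \<in> carrier M \<and> v \<in> carrier M \<and> w \<in> carrier M \<and> ((i, u), (j, v)) \<in> \<rho> \<and>
          as ! i \<otimes>\<^bsub>M\<^esub> u = as ! j \<otimes>\<^bsub>M\<^esub> v \<and> as ! i \<otimes>\<^bsub>M\<^esub> s = as ! i \<otimes>\<^bsub>M\<^esub> (u \<otimes>\<^bsub>M\<^esub> w)"
  shows "act_kernel M as \<subseteq> \<rho>"
proof
  fix p assume "p \<in> act_kernel M as"
  then obtain i s j t where p: "p = ((i, s), (j, t))" and ij: "i < length as" "j < length as"
    and st: "s \<in> carrier M" "t \<in> carrier M" and eq: "as ! i \<otimes>\<^bsub>M\<^esub> s = as ! j \<otimes>\<^bsub>M\<^esub> t"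
    unfolding act_kernel_def by (auto simp: free_act_iff)
  then obtain u v w where uvw: "u \<in> carrier M" "v \<in> carrier M" "w \<in> carrier M"
    and uv: "((i, u), (j, v)) \<in> \<rho>" "as ! i \<otimes>\<^bsub>M\<^esub> u = as ! j \<otimes>\<^bsub>M\<^esub> v"
    and s_eq: "as ! i \<otimes>\<^bsub>M\<^esub> s = as ! i \<otimes>\<^bsub>M\<^esub> (u \<otimes>\<^bsub>M\<^esub> w)"
    using meet by blast
  have "as ! i \<in> carrier M" "as ! j \<in> carrier M" using as ij nth_mem by blast+
  then have "as ! j \<otimes>\<^bsub>M\<^esub> (v \<otimes>\<^bsub>M\<^esub> w) = as ! j \<otimes>\<^bsub>M\<^esub> t"
    using eq s_eq uv(2) uvw M by (metis monoid.m_assoc)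
  then have "((j, v \<otimes>\<^bsub>M\<^esub> w), (j, t)) \<in> \<rho>"
    using coordinate ij uvw st M by (simp add: monoid.m_closed)
  moreover have "((i, s), (i, u \<otimes>\<^bsub>M\<^esub> w)) \<in> \<rho>"
    using coordinate ij uvw st s_eq M by (simp add: monoid.m_closed)
  ultimately show "p \<in> \<rho>"
    unfolding p using right_cong_free_act[OF \<rho> uv(1) uvw(3)] right_cong_free_trans[OF \<rho>] by blast
qed

text \<open>The kernel of \<open>(i, s) \<mapsto> a\<^sub>i s\<close> is generated by the kernels of the single maps
  \<open>s \<mapsto> a\<^sub>i s\<close> together with one pair \<open>((i, u), (j, v))\<close> for each generator \<open>a\<^sub>i u = a\<^sub>j v\<close> of
  \<open>a\<^sub>i M \<inter> a\<^sub>j M\<close>.\<close>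

lemma fg_act_kernel_if_equated_Howson:
  assumes M: "monoid M" and E: "finitely_right_equated M" and H: "principal_right_ideal_Howson M"
    and as: "set as \<subseteq> carrier M"
  shows "fg_right_cong_free M (length as) (act_kernel M as)"
proof -
  let ?n = "length as"
  let ?gens = "\<lambda>i G. finite G \<and> G \<subseteq> free_act M 1 \<times> free_act M 1 \<and>
      act_kernel M [as ! i] = cong_gen_free M 1 G"
  let ?witnesses = "\<lambda>i j W. finite W \<and> W \<subseteq> carrier M \<times> carrier M \<and>
      (\<forall>(u, v)\<in>W. as ! i \<otimes>\<^bsub>M\<^esub> u = as ! j \<otimes>\<^bsub>M\<^esub> v) \<and>
      (\<forall>s\<in>carrier M. \<forall>t\<in>carrier M. as ! i \<otimes>\<^bsub>M\<^esub> s = as ! j \<otimes>\<^bsub>M\<^esub> t \<longrightarrow>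
         (\<exists>(u, v)\<in>W. \<exists>w\<in>carrier M. as ! i \<otimes>\<^bsub>M\<^esub> s = as ! i \<otimes>\<^bsub>M\<^esub> (u \<otimes>\<^bsub>M\<^esub> w)))"
  define G where "G i = (SOME G. ?gens i G)" for i
  define W where "W i j = (SOME W. ?witnesses i j W)" for i j
  have a_in: "as ! i \<in> carrier M" if "i < ?n" for i using that as nth_mem by blast
  have G: "?gens i (G i)" if "i < ?n" for i
  proof -
    have "\<exists>G. ?gens i G"
      using E a_in[OF that] unfolding finitely_right_equated_def fg_right_cong_free_def by blast
    then show ?thesis unfolding G_def by (rule someI_ex)
  qed
  have W: "?witnesses i j (W i j)" if "i < ?n" "j < ?n" for i j
  proof -
    have "\<exists>W. ?witnesses i j W" using principal_right_ideal_Howson_witnesses[OF M H a_in a_in] that .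
    then show ?thesis unfolding W_def by (rule someI_ex)
  qed
  define H where "H = (\<Union>i<?n. (\<lambda>q. ((i, snd (fst q)), (i, snd (snd q)))) ` G i) \<union>
      (\<Union>i<?n. \<Union>j<?n. (\<lambda>q. ((i, fst q), (j, snd q))) ` W i j)"
  have H_G: "((i, snd x), (i, snd y)) \<in> H" if "i < ?n" "(x, y) \<in> G i" for i x y
    unfolding H_def using that by (intro UnI1 UN_I[of i] image_eqI[of _ _ "(x, y)"]) auto
  have H_W: "((i, u), (j, v)) \<in> H" if "i < ?n" "j < ?n" "(u, v) \<in> W i j" for i j u v
    unfolding H_def using that by (intro UnI2 UN_I[of i] UN_I[of j] image_eqI[of _ _ "(u, v)"]) auto
  have H_kernel: "H \<subseteq> act_kernel M as"
    unfolding H_def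
  proof (intro Un_least UN_least image_subsetI)
    fix i q assume "i \<in> {..<?n}" "q \<in> G i"
    then have "(fst q, snd q) \<in> act_kernel M [as ! i]" using G cong_gen_free_incl by fastforce
    then have "snd (fst q) \<in> carrier M" "snd (snd q) \<in> carrier M"
      "as ! i \<otimes>\<^bsub>M\<^esub> snd (fst q) = as ! i \<otimes>\<^bsub>M\<^esub> snd (snd q)"
      unfolding act_kernel_singleton by auto
    then show "((i, snd (fst q)), (i, snd (snd q))) \<in> act_kernel M as"
      using \<open>i \<in> {..<?n}\<close> unfolding act_kernel_def by (simp add: free_act_iff)
  next
    fix i j q assume "i \<in> {..<?n}" "j \<in> {..<?n}" "q \<in> W i j"
    then have "q \<in> carrier M \<times> carrier M" "as ! i \<otimes>\<^bsub>M\<^esub> fst q = as ! j \<otimes>\<^bsub>M\<^esub> snd q"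
      using W by (blast, auto simp: case_prod_beta)
    then show "((i, fst q), (j, snd q)) \<in> act_kernel M as"
      using \<open>i \<in> {..<?n}\<close> \<open>j \<in> {..<?n}\<close> unfolding act_kernel_def by (auto simp: mem_Times_iff free_act_iff)
  qed
  define \<rho> where "\<rho> = cong_gen_free M ?n H"
  have \<rho>: "right_cong_free M ?n \<rho>"
    using right_cong_free_cong_gen[OF M] H_kernel right_cong_free_subset[OF right_cong_free_act_kernel[OF M as]]
    unfolding \<rho>_def by blast
  have H_\<rho>: "H \<subseteq> \<rho>" unfolding \<rho>_def by (rule cong_gen_free_incl)
  have "act_kernel M as \<subseteq> \<rho>"
  proof (rule act_kernel_subset_right_cong[OF M as \<rho>])
    fix i s t assume "i < ?n" "s \<in> carrier M" "t \<in> carrier M" "as ! i \<otimes>\<^bsub>M\<^esub> s = as ! i \<otimes>\<^bsub>M\<^esub> t"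
    then have "((0, s), (0, t)) \<in> cong_gen_free M 1 (G i)"
      using G[OF \<open>i < ?n\<close>] act_kernel_singleton[of "(0, s)" "(0, t)" M "as ! i"] by simp
    moreover have "((i, snd x), (i, snd y)) \<in> \<rho>" if "(x, y) \<in> G i" for x y
      using H_\<rho> H_G that \<open>i < ?n\<close> by blast
    ultimately show "((i, s), (i, t)) \<in> \<rho>"
      using cong_gen_free_into_coordinate[OF M _ \<rho> \<open>i < ?n\<close>] G[OF \<open>i < ?n\<close>] by blast
  next
    fix i j s t assume ij: "i < ?n" "j < ?n" and "s \<in> carrier M" "t \<in> carrier M"
      and "as ! i \<otimes>\<^bsub>M\<^esub> s = as ! j \<otimes>\<^bsub>M\<^esub> t"
    then obtain u v w where uv: "(u, v) \<in> W i j" and w: "w \<in> carrier M"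
      and s_eq: "as ! i \<otimes>\<^bsub>M\<^esub> s = as ! i \<otimes>\<^bsub>M\<^esub> (u \<otimes>\<^bsub>M\<^esub> w)"
      using W by blast
    have "W i j \<subseteq> carrier M \<times> carrier M" "\<forall>(u, v)\<in>W i j. as ! i \<otimes>\<^bsub>M\<^esub> u = as ! j \<otimes>\<^bsub>M\<^esub> v"
      using W ij by blast+
    moreover have "((i, u), (j, v)) \<in> \<rho>" using H_\<rho> H_W uv ij by blast
    ultimately show "\<exists>u v w. u \<in> carrier M \<and> v \<in> carrier M \<and> w \<in> carrier M \<and> ((i, u), (j, v)) \<in> \<rho> \<and>
        as ! i \<otimes>\<^bsub>M\<^esub> u = as ! j \<otimes>\<^bsub>M\<^esub> v \<and> as ! i \<otimes>\<^bsub>M\<^esub> s = as ! i \<otimes>\<^bsub>M\<^esub> (u \<otimes>\<^bsub>M\<^esub> w)"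
      using uv w s_eq by blast
  qed
  moreover have "finite H" unfolding H_def using G W by simp
  ultimately show ?thesis using fg_act_kernelI[OF M as _ H_kernel] unfolding \<rho>_def by blast
qed

lemma weakly_right_coherentI:
  assumes M: "monoid M" and "finitely_right_equated M" "principal_right_ideal_Howson M"
  shows "weakly_right_coherent M"
  unfolding weakly_right_coherent_def
proof (intro allI impI)
  fix R assume "fg_right_ideal M R"
  then obtain X where X: "finite X" "X \<subseteq> carrier M" and R: "R = right_ideal_span M X"
    unfolding fg_right_ideal_def right_ideal_span_def by blast
  obtain as where as: "set as = X" using finite_list[OF X(1)] by blast
  have "set as \<subseteq> R" using right_ideal_span_incl[OF M] X R as by simp
  moreover have "fg_right_cong_free M (length as) (act_kernel M as)"
    using fg_act_kernel_if_equated_Howson[OF assms] X as by simp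
  moreover have "R = right_ideal_span M (set as)" using R as by simp
  ultimately show "fp_right_ideal M R"
    unfolding fp_right_ideal_def act_kernel_def[symmetric] right_ideal_span_set[symmetric]
    by (intro exI[of _ as] conjI)
qed

lemma act_kernel_subset_by_rewriting:
  assumes M: "monoid M" and as: "set as \<subseteq> carrier M" and \<rho>: "right_cong_free M (length bs) \<rho>"
    and f: "\<forall>l<length bs. f l < length as \<and> u l \<in> carrier M \<and> bs ! l = as ! f l \<otimes>\<^bsub>M\<^esub> u l"
    and rewrite: "\<And>l s. l < length bs \<Longrightarrow> s \<in> carrier M \<Longrightarrow> ((l, s), \<theta> (f l, u l \<otimes>\<^bsub>M\<^esub> s)) \<in> \<rho>"
    and \<theta>: "\<And>x y. (x, y) \<in> act_kernel M as \<Longrightarrow> (\<theta> x, \<theta> y) \<in> \<rho>"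
  shows "act_kernel M bs \<subseteq> \<rho>"
proof
  fix p assume "p \<in> act_kernel M bs"
  then obtain l s l' t where p: "p = ((l, s), (l', t))" and l: "l < length bs" "l' < length bs"
    and st: "s \<in> carrier M" "t \<in> carrier M" and eq: "bs ! l \<otimes>\<^bsub>M\<^esub> s = bs ! l' \<otimes>\<^bsub>M\<^esub> t"
    unfolding act_kernel_def by (auto simp: free_act_iff)
  have "as ! f l \<in> carrier M" "as ! f l' \<in> carrier M" using f l as nth_mem by blast+
  then have "((f l, u l \<otimes>\<^bsub>M\<^esub> s), (f l', u l' \<otimes>\<^bsub>M\<^esub> t)) \<in> act_kernel M as"
    using eq l st f M unfolding act_kernel_def by (auto simp: free_act_iff monoid.m_closed monoid.m_assoc)
  then show "p \<in> \<rho>"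
    unfolding p using \<theta> rewrite[OF l(1) st(1)] rewrite[OF l(2) st(2)]
      right_cong_free_trans[OF \<rho>] right_cong_free_sym[OF \<rho>] by meson
qed

lemma fg_act_kernel_change_generators:
  assumes M: "monoid M" and as: "set as \<subseteq> carrier M" and bs: "set bs \<subseteq> carrier M"
    and span: "right_ideal_span M (set as) = right_ideal_span M (set bs)"
    and fg: "fg_right_cong_free M (length as) (act_kernel M as)"
  shows "fg_right_cong_free M (length bs) (act_kernel M bs)"
proof -
  define na nb where "na = length as" and "nb = length bs"
  have "set bs \<subseteq> right_ideal_span M (set as)" using right_ideal_span_incl[OF M bs] span by simp
  then obtain f u where f: "\<forall>l<nb. f l < na \<and> u l \<in> carrier M \<and> bs ! l = as ! f l \<otimes>\<^bsub>M\<^esub> u l"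
    unfolding na_def nb_def by (rule right_ideal_span_set_factor)
  have "set as \<subseteq> right_ideal_span M (set bs)" using right_ideal_span_incl[OF M as] span by simp
  then obtain g v where g: "\<forall>k<na. g k < nb \<and> v k \<in> carrier M \<and> as ! k = bs ! g k \<otimes>\<^bsub>M\<^esub> v k"
    unfolding na_def nb_def by (rule right_ideal_span_set_factor)
  obtain Ha where Ha: "finite Ha" "Ha \<subseteq> free_act M na \<times> free_act M na"
    "act_kernel M as = cong_gen_free M na Ha"
    using fg unfolding fg_right_cong_free_def na_def by blast
  have b_in: "bs ! l \<in> carrier M" if "l < nb" for l using that bs nb_def nth_mem by blast
  define \<theta> where "\<theta> z = (g (fst z), v (fst z) \<otimes>\<^bsub>M\<^esub> snd z)" for z :: "nat \<times> 'a"
  have \<theta>: "\<theta> z \<in> free_act M nb" "bs ! fst (\<theta> z) \<otimes>\<^bsub>M\<^esub> snd (\<theta> z) = as ! fst z \<otimes>\<^bsub>M\<^esub> snd z"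
    if "z \<in> free_act M na" for z
    using that g b_in M unfolding \<theta>_def by (auto simp: free_act_iff monoid.m_closed monoid.m_assoc)
  define Hb where "Hb = (\<lambda>(x, y). (\<theta> x, \<theta> y)) ` Ha \<union>
      (\<lambda>l. ((l, \<one>\<^bsub>M\<^esub>), \<theta> (f l, u l))) ` {..<nb}"
  define \<rho> where "\<rho> = cong_gen_free M nb Hb"
  have Hb_kernel: "Hb \<subseteq> act_kernel M bs"
  proof -
    have "(\<theta> x, \<theta> y) \<in> act_kernel M bs" if "(x, y) \<in> Ha" for x y
    proof -
      have "(x, y) \<in> act_kernel M as" using that Ha(3) cong_gen_free_incl by blast
      then have "x \<in> free_act M na" "y \<in> free_act M na" "as ! fst x \<otimes>\<^bsub>M\<^esub> snd x = as ! fst y \<otimes>\<^bsub>M\<^esub> snd y"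
        unfolding act_kernel_def na_def by auto
      then show ?thesis unfolding act_kernel_def nb_def[symmetric] using \<theta> by simp
    qed
    moreover have "((l, \<one>\<^bsub>M\<^esub>), \<theta> (f l, u l)) \<in> act_kernel M bs" if "l < nb" for l
      using that f \<theta>[of "(f l, u l)"] b_in M
      unfolding act_kernel_def nb_def by (auto simp: free_act_iff monoid.r_one)
    ultimately show ?thesis unfolding Hb_def by auto
  qed
  have \<rho>: "right_cong_free M nb \<rho>"
    using right_cong_free_cong_gen[OF M] Hb_kernel unfolding \<rho>_def act_kernel_def nb_def by blast
  have to_as: "((l, s), \<theta> (f l, u l \<otimes>\<^bsub>M\<^esub> s)) \<in> \<rho>" if l: "l < nb" and s: "s \<in> carrier M" for l s
  proof -
    have "((l, \<one>\<^bsub>M\<^esub>), \<theta> (f l, u l)) \<in> Hb" unfolding Hb_def using l by blast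
    then have "((l, \<one>\<^bsub>M\<^esub>), (g (f l), v (f l) \<otimes>\<^bsub>M\<^esub> u l)) \<in> \<rho>"
      using cong_gen_free_incl unfolding \<rho>_def \<theta>_def by auto
    from right_cong_free_act[OF \<rho> this s]
    have "((l, \<one>\<^bsub>M\<^esub> \<otimes>\<^bsub>M\<^esub> s), (g (f l), v (f l) \<otimes>\<^bsub>M\<^esub> u l \<otimes>\<^bsub>M\<^esub> s)) \<in> \<rho>" .
    moreover have "v (f l) \<in> carrier M" "u l \<in> carrier M" using f g l by blast+
    ultimately show ?thesis unfolding \<theta>_def using M s by (simp add: monoid.m_assoc)
  qed
  have "(\<theta> x, \<theta> y) \<in> \<rho>" if "(x, y) \<in> act_kernel M as" for x y
  proof -
    have Ha_\<rho>: "(\<theta> x, \<theta> y) \<in> \<rho>" if "(x, y) \<in> Ha" for x y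
    proof -
      have "(\<theta> x, \<theta> y) \<in> Hb" unfolding Hb_def using that by (intro UnI1 image_eqI[of _ _ "(x, y)"]) auto
      then show ?thesis using cong_gen_free_incl unfolding \<rho>_def by blast
    qed
    have \<theta>_act: "\<theta> (fst x, snd x \<otimes>\<^bsub>M\<^esub> r) = (fst (\<theta> x), snd (\<theta> x) \<otimes>\<^bsub>M\<^esub> id r) \<and> id r \<in> carrier M"
      if "x \<in> free_act M na" "r \<in> carrier M" for x r
      using that g M unfolding \<theta>_def by (auto simp: free_act_iff monoid.m_assoc)
    have "(x, y) \<in> cong_gen_free M na Ha" using that Ha(3) by simp
    from cong_gen_free_map[OF M Ha(2) \<rho> \<theta>(1) \<theta>_act Ha_\<rho> this] show ?thesis .
  qed
  then have "act_kernel M bs \<subseteq> \<rho>"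
    using act_kernel_subset_by_rewriting[OF M as \<rho>[unfolded nb_def]] f to_as
    unfolding na_def nb_def by blast
  then show ?thesis
    using fg_act_kernelI[OF M bs _ Hb_kernel] Ha(1) unfolding \<rho>_def Hb_def nb_def by auto
qed

lemma weakly_right_coherent_fg_act_kernel:
  assumes M: "monoid M" and W: "weakly_right_coherent M" and as: "set as \<subseteq> carrier M"
  shows "fg_right_cong_free M (length as) (act_kernel M as)"
proof -
  let ?R = "right_ideal_span M (set as)"
  have "fg_right_ideal M ?R"
    unfolding fg_right_ideal_def right_ideal_span_def using as by blast
  then have "fp_right_ideal M ?R"
    using W right_ideal_span_right_ideal[OF M as] unfolding weakly_right_coherent_def by blast
  then obtain bs where bs: "set bs \<subseteq> ?R" "?R = right_ideal_span M (set bs)"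
      "fg_right_cong_free M (length bs) (act_kernel M bs)"
    unfolding fp_right_ideal_def act_kernel_def[symmetric] right_ideal_span_set[symmetric] by blast
  have "set bs \<subseteq> carrier M"
    using bs(1) right_ideal_span_right_ideal[OF M as] unfolding right_ideal_def by blast
  then show ?thesis using fg_act_kernel_change_generators[OF M _ as] bs by metis
qed

lemma weakly_right_coherent_finitely_right_equated:
  "monoid M \<Longrightarrow> weakly_right_coherent M \<Longrightarrow> finitely_right_equated M"
  unfolding finitely_right_equated_def using weakly_right_coherent_fg_act_kernel[of M "[_]"] by simp

lemma right_cong_free_act_kernel_meeting:
  assumes M: "monoid M" and as: "set as \<subseteq> carrier M" and J: "right_ideal M J"
  shows "right_cong_free M (length as)
    {(x, y) \<in> act_kernel M as. fst x = fst y \<or> as ! fst x \<otimes>\<^bsub>M\<^esub> snd x \<in> J}"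
    (is "right_cong_free M ?n ?\<sigma>")
proof -
  define \<kappa> where "\<kappa> z = as ! fst z \<otimes>\<^bsub>M\<^esub> snd z" for z
  have K: "right_cong_free M ?n (act_kernel M as)" by (rule right_cong_free_act_kernel[OF M as])
  have \<kappa>_eq: "\<kappa> x = \<kappa> y" if "(x, y) \<in> act_kernel M as" for x y
    using that unfolding act_kernel_def \<kappa>_def by auto
  have \<kappa>_act: "\<kappa> (fst x, snd x \<otimes>\<^bsub>M\<^esub> s) = \<kappa> x \<otimes>\<^bsub>M\<^esub> s" if "x \<in> free_act M ?n" "s \<in> carrier M" for x s
  proof -
    have "as ! fst x \<in> carrier M" using that as nth_mem by (blast dest: iffD1[OF free_act_iff])
    then show ?thesis using that M unfolding \<kappa>_def by (simp add: free_act_iff monoid.m_assoc)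
  qed
  show ?thesis
  proof (rule right_cong_freeI)
    show "(y, x) \<in> ?\<sigma>" if "(x, y) \<in> ?\<sigma>" for x y
    proof -
      have k: "(x, y) \<in> act_kernel M as" using that by simp
      show ?thesis using that right_cong_free_sym[OF K k] \<kappa>_eq[OF k, unfolded \<kappa>_def] by auto
    qed
    show "(x, z) \<in> ?\<sigma>" if "(x, y) \<in> ?\<sigma>" "(y, z) \<in> ?\<sigma>" for x y z
    proof -
      have k: "(x, y) \<in> act_kernel M as" "(y, z) \<in> act_kernel M as" using that by simp_all
      show ?thesis using that right_cong_free_trans[OF K k] \<kappa>_eq[OF k(1), unfolded \<kappa>_def] by auto
    qed
    show "((fst x, snd x \<otimes>\<^bsub>M\<^esub> s), (fst y, snd y \<otimes>\<^bsub>M\<^esub> s)) \<in> ?\<sigma>"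
      if "(x, y) \<in> ?\<sigma>" "s \<in> carrier M" for x y s
    proof -
      have k: "(x, y) \<in> act_kernel M as" and "fst x = fst y \<or> \<kappa> x \<in> J"
        using that unfolding \<kappa>_def by simp_all
      moreover have "x \<in> free_act M ?n" using k right_cong_free_subset[OF K] by blast
      moreover have "((fst x, snd x \<otimes>\<^bsub>M\<^esub> s), (fst y, snd y \<otimes>\<^bsub>M\<^esub> s)) \<in> act_kernel M as"
        using right_cong_free_act[OF K, of "fst x" "snd x" "fst y" "snd y" s] k that(2) by simp
      ultimately show ?thesis
        using that(2) J \<kappa>_act unfolding right_ideal_def \<kappa>_def by auto
    qed
    show "?\<sigma> \<subseteq> free_act M ?n \<times> free_act M ?n" using right_cong_free_subset[OF K] by blast
    show "(x, x) \<in> ?\<sigma>" if "x \<in> free_act M ?n" for x using right_cong_free_refl[OF K that] by simp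
  qed
qed

text \<open>Proof: the pairs of the kernel that stay in one coordinate or whose value lies in this
  right ideal form a right congruence containing \<open>H\<close>.\<close>

lemma act_kernel_meeting_value_in_span:
  assumes M: "monoid M" and as: "set as \<subseteq> carrier M"
    and H: "act_kernel M as = cong_gen_free M (length as) H"
    and xy: "(x, y) \<in> act_kernel M as" "fst x \<noteq> fst y"
  shows "as ! fst x \<otimes>\<^bsub>M\<^esub> snd x \<in>
    right_ideal_span M ((\<lambda>(x, y). as ! fst x \<otimes>\<^bsub>M\<^esub> snd x) ` {(x, y) \<in> H. fst x \<noteq> fst y})"
    (is "_ \<in> right_ideal_span M ?X")
proof -
  let ?\<sigma> = "{(x, y) \<in> act_kernel M as. fst x = fst y \<or> as ! fst x \<otimes>\<^bsub>M\<^esub> snd x \<in> right_ideal_span M ?X}"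
  have H_kernel: "H \<subseteq> act_kernel M as" using H cong_gen_free_incl by blast
  have X_in: "?X \<subseteq> carrier M"
  proof
    fix c assume "c \<in> ?X"
    then obtain u v where "(u, v) \<in> H" and c: "c = as ! fst u \<otimes>\<^bsub>M\<^esub> snd u" by force
    then have "fst u < length as" "snd u \<in> carrier M"
      using H_kernel unfolding act_kernel_def by (auto simp: free_act_iff)
    then show "c \<in> carrier M" using c as M nth_mem by (blast intro: monoid.m_closed)
  qed
  have "H \<subseteq> ?\<sigma>"
  proof
    fix p assume "p \<in> H"
    obtain u v where p: "p = (u, v)" by (cases p)
    have "as ! fst u \<otimes>\<^bsub>M\<^esub> snd u \<in> ?X" if "fst u \<noteq> fst v" using \<open>p \<in> H\<close> p that by force
    then show "p \<in> ?\<sigma>"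
      using H_kernel \<open>p \<in> H\<close> right_ideal_span_incl[OF M X_in] unfolding p by auto
  qed
  with right_cong_free_act_kernel_meeting[OF M as right_ideal_span_right_ideal[OF M X_in]]
  have "cong_gen_free M (length as) H \<subseteq> ?\<sigma>" by (rule cong_gen_free_least)
  moreover have "(x, y) \<in> cong_gen_free M (length as) H" using xy(1) unfolding H .
  ultimately show ?thesis using xy(2) by blast
qed

lemma weakly_right_coherent_principal_right_ideal_Howson:
  assumes M: "monoid M" and W: "weakly_right_coherent M"
  shows "principal_right_ideal_Howson M"
  unfolding principal_right_ideal_Howson_def fg_principal_meet_def
proof (intro ballI)
  fix a b assume a: "a \<in> carrier M" and b: "b \<in> carrier M"
  define as where "as = [a, b]"
  have as_in: "set as \<subseteq> carrier M" using a b unfolding as_def by simp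
  obtain H where H: "finite H" "act_kernel M as = cong_gen_free M (length as) H"
    using weakly_right_coherent_fg_act_kernel[OF M W as_in] unfolding fg_right_cong_free_def by blast
  define X where "X = (\<lambda>(x, y). as ! fst x \<otimes>\<^bsub>M\<^esub> snd x) ` {(x, y) \<in> H. fst x \<noteq> fst y}"
  have value_in: "as ! fst x \<otimes>\<^bsub>M\<^esub> snd x \<in> right_ideal_span M {as ! fst x}" if "x \<in> free_act M 2" for x
    using that right_ideal_spanI[of "as ! fst x" "{as ! fst x}" "snd x" M] by (simp add: free_act_iff)
  have X_meet: "X \<subseteq> right_ideal_span M {a} \<inter> right_ideal_span M {b}"
  proof
    fix c assume "c \<in> X"
    then obtain x y where xy: "(x, y) \<in> H" "fst x \<noteq> fst y" and c: "c = as ! fst x \<otimes>\<^bsub>M\<^esub> snd x"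
      unfolding X_def by force
    then have "(x, y) \<in> act_kernel M as" using H cong_gen_free_incl by blast
    then have x: "x \<in> free_act M 2" and y: "y \<in> free_act M 2"
      and c': "c = as ! fst y \<otimes>\<^bsub>M\<^esub> snd y"
      unfolding act_kernel_def as_def c by (auto simp: numeral_2_eq_2)
    have "c \<in> right_ideal_span M {as ! fst x}" using value_in[OF x] c by simp
    moreover have "c \<in> right_ideal_span M {as ! fst y}" using value_in[OF y] c' by simp
    moreover have "fst x = 0 \<and> fst y = 1 \<or> fst x = 1 \<and> fst y = 0"
      using xy(2) x y by (auto simp: free_act_iff)
    ultimately show "c \<in> right_ideal_span M {a} \<inter> right_ideal_span M {b}"
      unfolding as_def by auto
  qed
  have X_in: "X \<subseteq> carrier M"
    using X_meet right_ideal_span_right_ideal[OF M, of "{a}"] a unfolding right_ideal_def by blast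
  show "\<exists>X. finite X \<and> X \<subseteq> carrier M \<and>
      right_ideal_span M {a} \<inter> right_ideal_span M {b} = right_ideal_span M X"
  proof (intro exI conjI)
    show "finite X"
      unfolding X_def by (rule finite_imageI, rule finite_subset[OF _ H(1)]) auto
    show "X \<subseteq> carrier M" by (fact X_in)
    show "right_ideal_span M {a} \<inter> right_ideal_span M {b} = right_ideal_span M X"
    proof
      show "right_ideal_span M {a} \<inter> right_ideal_span M {b} \<subseteq> right_ideal_span M X"
      proof
        fix z assume "z \<in> right_ideal_span M {a} \<inter> right_ideal_span M {b}"
        then obtain s t where st: "s \<in> carrier M" "t \<in> carrier M" "z = a \<otimes>\<^bsub>M\<^esub> s" "z = b \<otimes>\<^bsub>M\<^esub> t"
          unfolding Int_iff right_ideal_span_singleton by blast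
        then have "((0, s), (1, t)) \<in> act_kernel M as"
          unfolding act_kernel_def as_def by (simp add: free_act_iff)
        from act_kernel_meeting_value_in_span[OF M as_in H(2) this]
        show "z \<in> right_ideal_span M X" using st unfolding X_def as_def by simp
      qed
      have "right_ideal M (right_ideal_span M {a} \<inter> right_ideal_span M {b})"
        using right_ideal_span_right_ideal[OF M] a b by (simp add: right_ideal_Int)
      from right_ideal_span_least[OF this X_meet]
      show "right_ideal_span M X \<subseteq> right_ideal_span M {a} \<inter> right_ideal_span M {b}" .
    qed
  qed
qed

lemma weakly_right_coherent_iff:
  "monoid M \<Longrightarrow>
    weakly_right_coherent M \<longleftrightarrow> finitely_right_equated M \<and> principal_right_ideal_Howson M"
  using weakly_right_coherentI weakly_right_coherent_finitely_right_equated
    weakly_right_coherent_principal_right_ideal_Howson by blast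

section \<open>Retracts\<close>

text \<open>The maps are only multiplicative: the embedding of a factor \<open>S\<^sub>i\<^sup>1\<close> into \<open>F\<^sup>1\<close> need
  not preserve the identity.\<close>

locale monoid_retract =
  fixes M :: "('a, 'b) monoid_scheme" and N :: "('c, 'd) monoid_scheme"
    and \<iota> :: "'c \<Rightarrow> 'a" and \<pi> :: "'a \<Rightarrow> 'c"
  assumes monoid_M: "monoid M" and monoid_N: "monoid N"
    and \<iota>_closed: "\<And>a. a \<in> carrier N \<Longrightarrow> \<iota> a \<in> carrier M"
    and \<iota>_mult: "\<And>a b. a \<in> carrier N \<Longrightarrow> b \<in> carrier N \<Longrightarrow> \<iota> (a \<otimes>\<^bsub>N\<^esub> b) = \<iota> a \<otimes>\<^bsub>M\<^esub> \<iota> b"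
    and \<pi>_closed: "\<And>a. a \<in> carrier M \<Longrightarrow> \<pi> a \<in> carrier N"
    and \<pi>_mult: "\<And>a b. a \<in> carrier M \<Longrightarrow> b \<in> carrier M \<Longrightarrow> \<pi> (a \<otimes>\<^bsub>M\<^esub> b) = \<pi> a \<otimes>\<^bsub>N\<^esub> \<pi> b"
    and \<pi>_\<iota>: "\<And>a. a \<in> carrier N \<Longrightarrow> \<pi> (\<iota> a) = a"
begin

lemma finitely_right_equated_retract:
  assumes E: "finitely_right_equated M"
  shows "finitely_right_equated N"
  unfolding finitely_right_equated_def
proof
  fix a assume a: "a \<in> carrier N"
  obtain G where G: "finite G" "G \<subseteq> free_act M 1 \<times> free_act M 1"
    "act_kernel M [\<iota> a] = cong_gen_free M 1 G"
    using E \<iota>_closed[OF a] unfolding finitely_right_equated_def fg_right_cong_free_def by blast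
  define \<theta> where "\<theta> z = (fst z, \<pi> (snd z))" for z :: "nat \<times> 'a"
  define G' where "G' = (\<lambda>(x, y). (\<theta> x, \<theta> y)) ` G"
  have \<theta>_kernel: "(\<theta> x, \<theta> y) \<in> act_kernel N [a]" if "(x, y) \<in> act_kernel M [\<iota> a]" for x y
  proof -
    have xy: "snd x \<in> carrier M" "snd y \<in> carrier M" "\<iota> a \<otimes>\<^bsub>M\<^esub> snd x = \<iota> a \<otimes>\<^bsub>M\<^esub> snd y"
      and fst: "fst x = 0" "fst y = 0" using that unfolding act_kernel_singleton by auto
    have "a \<otimes>\<^bsub>N\<^esub> \<pi> (snd x) = \<pi> (\<iota> a \<otimes>\<^bsub>M\<^esub> snd x)" using \<pi>_mult \<iota>_closed \<pi>_\<iota> a xy(1) by simp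
    also have "\<dots> = \<pi> (\<iota> a \<otimes>\<^bsub>M\<^esub> snd y)" using xy(3) by simp
    also have "\<dots> = a \<otimes>\<^bsub>N\<^esub> \<pi> (snd y)" using \<pi>_mult \<iota>_closed \<pi>_\<iota> a xy(2) by simp
    finally have "a \<otimes>\<^bsub>N\<^esub> \<pi> (snd x) = a \<otimes>\<^bsub>N\<^esub> \<pi> (snd y)" .
    then show ?thesis unfolding act_kernel_singleton \<theta>_def using fst xy \<pi>_closed by simp
  qed
  have G'_kernel: "G' \<subseteq> act_kernel N [a]"
    unfolding G'_def
  proof (intro image_subsetI, unfold case_prod_beta)
    fix q assume "q \<in> G"
    then have "(fst q, snd q) \<in> act_kernel M [\<iota> a]" using G(3) cong_gen_free_incl by fastforce
    from \<theta>_kernel[OF this] show "(\<theta> (fst q), \<theta> (snd q)) \<in> act_kernel N [a]" .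
  qed
  have \<rho>: "right_cong_free N 1 (cong_gen_free N 1 G')"
    using right_cong_free_cong_gen[OF monoid_N] G'_kernel
      right_cong_free_subset[OF right_cong_free_act_kernel[OF monoid_N, of "[a]"]] a
    by auto
  have "act_kernel N [a] \<subseteq> cong_gen_free N 1 G'"
  proof
    fix p assume "p \<in> act_kernel N [a]"
    then obtain s t where p: "p = ((0, s), (0, t))" and st: "s \<in> carrier N" "t \<in> carrier N"
      and eq: "a \<otimes>\<^bsub>N\<^esub> s = a \<otimes>\<^bsub>N\<^esub> t"
      by (cases p) (auto simp: act_kernel_singleton)
    have "\<iota> a \<otimes>\<^bsub>M\<^esub> \<iota> s = \<iota> a \<otimes>\<^bsub>M\<^esub> \<iota> t" using eq \<iota>_mult[OF a] st by metis
    then have "((0, \<iota> s), (0, \<iota> t)) \<in> act_kernel M [\<iota> a]"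
      using st \<iota>_closed by (simp add: act_kernel_singleton)
    then have in_gen: "((0, \<iota> s), (0, \<iota> t)) \<in> cong_gen_free M 1 G" using G(3) by simp
    have G_\<rho>: "(\<theta> x, \<theta> y) \<in> cong_gen_free N 1 G'" if "(x, y) \<in> G" for x y
    proof -
      have "(\<theta> x, \<theta> y) \<in> G'" unfolding G'_def by (intro image_eqI[of _ _ "(x, y)"]) (simp_all add: that)
      then show ?thesis using cong_gen_free_incl by blast
    qed
    have \<theta>_act: "\<theta> (fst x, snd x \<otimes>\<^bsub>M\<^esub> r) = (fst (\<theta> x), snd (\<theta> x) \<otimes>\<^bsub>N\<^esub> \<pi> r) \<and> \<pi> r \<in> carrier N"
      if "x \<in> free_act M 1" "r \<in> carrier M" for x r
      using that \<pi>_mult \<pi>_closed unfolding \<theta>_def by (simp add: free_act_iff)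
    have \<theta>_free: "\<theta> x \<in> free_act N 1" if "x \<in> free_act M 1" for x
      using that \<pi>_closed unfolding \<theta>_def by (simp add: free_act_iff)
    have "(\<theta> (0, \<iota> s), \<theta> (0, \<iota> t)) \<in> cong_gen_free N 1 G'"
      by (rule cong_gen_free_map[OF monoid_M G(2) \<rho> \<theta>_free \<theta>_act G_\<rho> in_gen])
    then show "p \<in> cong_gen_free N 1 G'" unfolding p \<theta>_def using \<pi>_\<iota> st by simp
  qed
  moreover have "finite G'" unfolding G'_def using G(1) by simp
  ultimately show "fg_right_cong_free N 1 (act_kernel N [a])"
    using fg_act_kernelI[OF monoid_N, of "[a]"] G'_kernel a by simp
qed

lemma \<pi>_principal:
  assumes a: "a \<in> carrier N" and z: "z \<in> right_ideal_span M {\<iota> a}"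
  shows "\<pi> z \<in> right_ideal_span N {a}"
proof -
  obtain s where "s \<in> carrier M" "z = \<iota> a \<otimes>\<^bsub>M\<^esub> s"
    using z unfolding right_ideal_span_singleton by blast
  then show ?thesis
    using a \<pi>_mult \<iota>_closed \<pi>_\<iota> \<pi>_closed unfolding right_ideal_span_singleton by auto
qed

lemma principal_right_ideal_Howson_retract:
  assumes H: "principal_right_ideal_Howson M"
  shows "principal_right_ideal_Howson N"
  unfolding principal_right_ideal_Howson_def fg_principal_meet_def
proof (intro ballI)
  fix a b assume a: "a \<in> carrier N" and b: "b \<in> carrier N"
  obtain X where X: "finite X" "X \<subseteq> carrier M"
    and X_eq: "right_ideal_span M {\<iota> a} \<inter> right_ideal_span M {\<iota> b} = right_ideal_span M X"
    using H \<iota>_closed[OF a] \<iota>_closed[OF b] unfolding principal_right_ideal_Howson_def fg_principal_meet_def by meson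
  have "right_ideal_span N {a} \<inter> right_ideal_span N {b} = right_ideal_span N (\<pi> ` X)"
  proof
    show "right_ideal_span N {a} \<inter> right_ideal_span N {b} \<subseteq> right_ideal_span N (\<pi> ` X)"
    proof
      fix z assume "z \<in> right_ideal_span N {a} \<inter> right_ideal_span N {b}"
      then obtain s t where st: "s \<in> carrier N" "t \<in> carrier N" "z = a \<otimes>\<^bsub>N\<^esub> s" "z = b \<otimes>\<^bsub>N\<^esub> t"
        unfolding Int_iff right_ideal_span_singleton by blast
      have "\<iota> z = \<iota> a \<otimes>\<^bsub>M\<^esub> \<iota> s" using st(3) \<iota>_mult[OF a st(1)] by simp
      moreover have "\<iota> z = \<iota> b \<otimes>\<^bsub>M\<^esub> \<iota> t" using st(4) \<iota>_mult[OF b st(2)] by simp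
      ultimately have "\<iota> z \<in> right_ideal_span M X"
        unfolding X_eq[symmetric] Int_iff right_ideal_span_singleton using st \<iota>_closed by blast
      then obtain c w where c: "c \<in> X" "w \<in> carrier M" "\<iota> z = c \<otimes>\<^bsub>M\<^esub> w"
        by (rule right_ideal_spanE)
      have "z \<in> carrier N" using st a monoid.m_closed[OF monoid_N] by simp
      then have "z = \<pi> c \<otimes>\<^bsub>N\<^esub> \<pi> w" using c X(2) \<pi>_\<iota> \<pi>_mult by (metis subsetD)
      then show "z \<in> right_ideal_span N (\<pi> ` X)"
        using right_ideal_spanI[of "\<pi> c" "\<pi> ` X" "\<pi> w" N] c \<pi>_closed by simp
    qed
    have "\<pi> ` X \<subseteq> right_ideal_span N {a} \<inter> right_ideal_span N {b}"
      using right_ideal_span_incl[OF monoid_M X(2)] \<pi>_principal a b unfolding X_eq[symmetric] by blast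
    moreover have "right_ideal N (right_ideal_span N {a} \<inter> right_ideal_span N {b})"
      using right_ideal_span_right_ideal[OF monoid_N] a b by (simp add: right_ideal_Int)
    ultimately show "right_ideal_span N (\<pi> ` X) \<subseteq> right_ideal_span N {a} \<inter> right_ideal_span N {b}"
      by (intro right_ideal_span_least)
  qed
  moreover have "finite (\<pi> ` X)" "\<pi> ` X \<subseteq> carrier N" using X \<pi>_closed by auto
  ultimately show "\<exists>X. finite X \<and> X \<subseteq> carrier N \<and>
      right_ideal_span N {a} \<inter> right_ideal_span N {b} = right_ideal_span N X"
    by (intro exI[of _ "\<pi> ` X"]) simp
qed

lemma weakly_right_coherent_retract: "weakly_right_coherent M \<Longrightarrow> weakly_right_coherent N"
  using weakly_right_coherent_iff[OF monoid_M] weakly_right_coherent_iff[OF monoid_N]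
    finitely_right_equated_retract principal_right_ideal_Howson_retract by blast

end

section \<open>Adjoining an identity\<close>

lemma adjoin_one_mult [simp]:
  "None \<otimes>\<^bsub>adjoin_one S\<^esub> y = y"
  "x \<otimes>\<^bsub>adjoin_one S\<^esub> None = x"
  "Some a \<otimes>\<^bsub>adjoin_one S\<^esub> Some b = Some (a \<otimes>\<^bsub>S\<^esub> b)"
  by (auto simp: adjoin_one_def split: option.splits)

lemma is_identity_unique: "is_identity S e \<Longrightarrow> is_identity S e' \<Longrightarrow> e = e'"
  unfolding is_identity_def by metis

lemma adjoin_one_identity:
  assumes "is_identity S e"
  shows "carrier (adjoin_one S) = Some ` carrier S" "\<one>\<^bsub>adjoin_one S\<^esub> = Some e"
proof -
  have "(SOME e. is_identity S e) = e" using assms is_identity_unique[OF _ assms] by (rule some_equality)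
  then show "carrier (adjoin_one S) = Some ` carrier S" "\<one>\<^bsub>adjoin_one S\<^esub> = Some e"
    using assms unfolding adjoin_one_def by auto
qed

lemma adjoin_one_no_identity:
  assumes "\<nexists>e. is_identity S e"
  shows "carrier (adjoin_one S) = insert None (Some ` carrier S)" "\<one>\<^bsub>adjoin_one S\<^esub> = None"
  using assms unfolding adjoin_one_def by auto

lemma Some_in_adjoin_one_iff [simp]: "Some a \<in> carrier (adjoin_one S) \<longleftrightarrow> a \<in> carrier S"
  unfolding adjoin_one_def by auto

lemma None_in_adjoin_one_iff: "None \<in> carrier (adjoin_one S) \<longleftrightarrow> (\<nexists>e. is_identity S e)"
  unfolding adjoin_one_def by auto

text \<open>The multiplication of \<open>adjoin_one S\<close> treats \<open>None\<close> as an identity on all of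
  \<open>option_carrier S\<close>, even when \<open>None\<close> is not an element of \<open>adjoin_one S\<close>.\<close>

definition option_carrier :: "('a, 'b) monoid_scheme \<Rightarrow> 'a option set" where
  "option_carrier S = insert None (Some ` carrier S)"

lemma option_carrier_mult_closed:
  "is_semigroup S \<Longrightarrow> x \<in> option_carrier S \<Longrightarrow> y \<in> option_carrier S \<Longrightarrow>
    x \<otimes>\<^bsub>adjoin_one S\<^esub> y \<in> option_carrier S"
  unfolding option_carrier_def is_semigroup_def by auto

lemma option_carrier_mult_assoc:
  "is_semigroup S \<Longrightarrow> x \<in> option_carrier S \<Longrightarrow> y \<in> option_carrier S \<Longrightarrow> z \<in> option_carrier S \<Longrightarrow>
    (x \<otimes>\<^bsub>adjoin_one S\<^esub> y) \<otimes>\<^bsub>adjoin_one S\<^esub> z = x \<otimes>\<^bsub>adjoin_one S\<^esub> (y \<otimes>\<^bsub>adjoin_one S\<^esub> z)"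
  unfolding option_carrier_def is_semigroup_def by auto

lemma adjoin_one_subset_option_carrier: "carrier (adjoin_one S) \<subseteq> option_carrier S"
  unfolding adjoin_one_def option_carrier_def by auto

lemma option_carrier_not_in_adjoin_one:
  "x \<in> option_carrier S \<Longrightarrow> x \<notin> carrier (adjoin_one S) \<Longrightarrow> x = None"
  unfolding option_carrier_def by auto

lemma adjoin_one_one_closed: "\<one>\<^bsub>adjoin_one S\<^esub> \<in> carrier (adjoin_one S)"
  by (cases "\<exists>e. is_identity S e")
     (auto simp: adjoin_one_identity adjoin_one_no_identity is_identity_def)

lemma adjoin_one_l_one: "x \<in> carrier (adjoin_one S) \<Longrightarrow> \<one>\<^bsub>adjoin_one S\<^esub> \<otimes>\<^bsub>adjoin_one S\<^esub> x = x"
  by (cases "\<exists>e. is_identity S e")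
     (auto simp: adjoin_one_identity adjoin_one_no_identity is_identity_def)

lemma adjoin_one_r_one: "x \<in> carrier (adjoin_one S) \<Longrightarrow> x \<otimes>\<^bsub>adjoin_one S\<^esub> \<one>\<^bsub>adjoin_one S\<^esub> = x"
  by (cases "\<exists>e. is_identity S e")
     (auto simp: adjoin_one_identity adjoin_one_no_identity is_identity_def)

lemma adjoin_one_r_one_closed:
  "x \<in> option_carrier S \<Longrightarrow> x \<otimes>\<^bsub>adjoin_one S\<^esub> \<one>\<^bsub>adjoin_one S\<^esub> \<in> carrier (adjoin_one S)"
  by (cases "\<exists>e. is_identity S e")
     (auto simp: adjoin_one_identity adjoin_one_no_identity is_identity_def option_carrier_def)

lemma monoid_adjoin_one:
  assumes S: "is_semigroup S"
  shows "monoid (adjoin_one S)"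
proof (rule monoidI)
  fix x y z
  assume x: "x \<in> carrier (adjoin_one S)" and y: "y \<in> carrier (adjoin_one S)"
  then show "x \<otimes>\<^bsub>adjoin_one S\<^esub> y \<in> carrier (adjoin_one S)"
    using S unfolding is_semigroup_def by (cases x; cases y) auto
  assume "z \<in> carrier (adjoin_one S)"
  then show "x \<otimes>\<^bsub>adjoin_one S\<^esub> y \<otimes>\<^bsub>adjoin_one S\<^esub> z = x \<otimes>\<^bsub>adjoin_one S\<^esub> (y \<otimes>\<^bsub>adjoin_one S\<^esub> z)"
    using option_carrier_mult_assoc[OF S] adjoin_one_subset_option_carrier x y by blast
qed (auto simp: adjoin_one_one_closed adjoin_one_l_one adjoin_one_r_one)

section \<open>The semigroup free product\<close>

lemma free_product_simps [simp]:
  "carrier (free_product S I) = fp_carrier S I"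
  "x \<otimes>\<^bsub>free_product S I\<^esub> y = fp_mult S x y"
  by (simp_all add: free_product_def)

definition letters_in :: "('i \<Rightarrow> ('a, 'b) monoid_scheme) \<Rightarrow> 'i set \<Rightarrow> ('i \<times> 'a) list \<Rightarrow> bool" where
  "letters_in S I xs \<longleftrightarrow> (\<forall>p\<in>set xs. fst p \<in> I \<and> snd p \<in> carrier (S (fst p)))"

lemma letters_in_simps [simp]:
  "letters_in S I []"
  "letters_in S I (p # xs) \<longleftrightarrow> fst p \<in> I \<and> snd p \<in> carrier (S (fst p)) \<and> letters_in S I xs"
  "letters_in S I (xs @ ys) \<longleftrightarrow> letters_in S I xs \<and> letters_in S I ys"
  unfolding letters_in_def by auto

lemma fp_carrier_iff:
  "xs \<in> fp_carrier S I \<longleftrightarrow> xs \<noteq> [] \<and> letters_in S I xs \<and> successively (\<lambda>p q. fst p \<noteq> fst q) xs"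
  unfolding fp_carrier_def letters_in_def successively_conv_nth by auto

lemma fp_carrier_letters_in: "xs \<in> fp_carrier S I \<Longrightarrow> letters_in S I xs"
  by (simp add: fp_carrier_iff)

lemma fp_carrier_singleton: "j \<in> I \<Longrightarrow> y \<in> carrier (S j) \<Longrightarrow> [(j, y)] \<in> fp_carrier S I"
  by (simp add: fp_carrier_iff)

lemma fp_carrier_snocE:
  assumes "w \<in> fp_carrier S I"
  obtains u i x where "w = u @ [(i, x)]" "i \<in> I" "x \<in> carrier (S i)"
proof -
  obtain u p where "w = u @ [p]" using assms unfolding fp_carrier_iff by (metis rev_exhaust)
  then show ?thesis using that assms unfolding fp_carrier_iff by (cases p) auto
qed

lemma fp_carrier_ConsE:
  assumes "w \<in> fp_carrier S I"
  obtains j y v where "w = (j, y) # v"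
  using assms unfolding fp_carrier_iff by (metis list.exhaust surj_pair)

lemma fp_carrier_tail:
  "p # v \<in> fp_carrier S I \<Longrightarrow> v = [] \<or> v \<in> fp_carrier S I \<and> fst (hd v) \<noteq> fst p"
  unfolding fp_carrier_iff by (cases v) (auto simp: successively_Cons)

lemma fp_carrier_suffix: "u @ w \<in> fp_carrier S I \<Longrightarrow> w \<noteq> [] \<Longrightarrow> w \<in> fp_carrier S I"
  unfolding fp_carrier_iff by (auto simp: successively_append_iff)

lemma fp_carrier_replace_last:
  "u @ [(i, x)] \<in> fp_carrier S I \<Longrightarrow> z \<in> carrier (S i) \<Longrightarrow> u @ [(i, z)] \<in> fp_carrier S I"
  unfolding fp_carrier_iff by (auto simp: successively_append_iff)

lemma fp_mult_Nil [simp]: "fp_mult S [] ys = ys" "fp_mult S xs [] = xs"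
  by (auto simp: fp_mult_def)

lemma fp_mult_snoc_Cons:
  "fp_mult S (a @ [(i, x)]) ((j, y) # c) =
     (if i = j then a @ (i, x \<otimes>\<^bsub>S i\<^esub> y) # c else a @ (i, x) # (j, y) # c)"
  by (simp add: fp_mult_def)

lemma fp_mult_singleton: "fp_mult S [(k, a)] [(k, b)] = [(k, a \<otimes>\<^bsub>S k\<^esub> b)]"
  by (simp add: fp_mult_def)

lemma fp_mult_assoc:
  assumes S: "\<forall>i\<in>I. is_semigroup (S i)"
    and xs: "letters_in S I xs" and ys: "letters_in S I ys" and zs: "letters_in S I zs"
  shows "fp_mult S (fp_mult S xs ys) zs = fp_mult S xs (fp_mult S ys zs)"
proof (cases "xs = [] \<or> ys = [] \<or> zs = []")
  case True then show ?thesis by auto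
next
  case False
  then obtain a i x k z c j y b where e: "xs = a @ [(i, x)]" "zs = (k, z) # c" "ys = (j, y) # b"
    by (metis list.exhaust rev_exhaust surj_pair)
  show ?thesis
  proof (cases "b = []")
    case True
    have "(x \<otimes>\<^bsub>S i\<^esub> y) \<otimes>\<^bsub>S i\<^esub> z = x \<otimes>\<^bsub>S i\<^esub> (y \<otimes>\<^bsub>S i\<^esub> z)" if "i = j" "j = k"
      using S xs ys zs e that unfolding is_semigroup_def by auto
    then show ?thesis
      using fp_mult_snoc_Cons[of S "[]" j y k z c] fp_mult_snoc_Cons[of S a i x j y "[]"]
      unfolding e True by (auto simp: fp_mult_def butlast_append)
  next
    case False
    then obtain b' l w where b: "b = b' @ [(l, w)]" by (metis rev_exhaust surj_pair)
    show ?thesis unfolding e b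
      using fp_mult_snoc_Cons[of S "(j, y) # b'" l w k z c]
        fp_mult_snoc_Cons[of S a i x j y "b' @ [(l, w)]"]
        fp_mult_snoc_Cons[of S "a @ (i, x \<otimes>\<^bsub>S i\<^esub> y) # b'" l w k z c]
        fp_mult_snoc_Cons[of S "a @ (i, x) # (j, y) # b'" l w k z c]
        fp_mult_snoc_Cons[of S a i x j y "b' @ (l, w \<otimes>\<^bsub>S l\<^esub> z) # c"]
        fp_mult_snoc_Cons[of S a i x j y "b' @ (l, w) # (k, z) # c"]
      by auto
  qed
qed

lemma fp_mult_closed:
  assumes S: "\<forall>i\<in>I. is_semigroup (S i)"
    and xs: "xs \<in> fp_carrier S I" and ys: "ys \<in> fp_carrier S I"
  shows "fp_mult S xs ys \<in> fp_carrier S I"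
proof -
  obtain a i x where xe: "xs = a @ [(i, x)]" using xs by (rule fp_carrier_snocE)
  obtain j y c where ye: "ys = (j, y) # c" using ys by (rule fp_carrier_ConsE)
  have "x \<otimes>\<^bsub>S i\<^esub> y \<in> carrier (S i)" if "i = j"
    using S xs ys that unfolding xe ye fp_carrier_iff is_semigroup_def by auto
  then show ?thesis
    using xs ys unfolding xe ye fp_mult_snoc_Cons fp_carrier_iff
    by (auto simp: successively_append_iff successively_Cons)
qed

lemma is_semigroup_free_product:
  assumes "\<forall>i\<in>I. is_semigroup (S i)"
  shows "is_semigroup (free_product S I)"
  unfolding is_semigroup_def free_product_simps
  using fp_mult_closed[OF assms] fp_mult_assoc[OF assms] fp_carrier_letters_in by blast

lemma monoid_adjoin_one_free_product:
  "\<forall>i\<in>I. is_semigroup (S i) \<Longrightarrow> monoid (adjoin_one (free_product S I))"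
  by (intro monoid_adjoin_one is_semigroup_free_product)

text \<open>An identity of the free product is a one-letter word: multiplying it by itself can only
  shorten it by merging.  Then no other factor can be nonempty.\<close>

lemma free_product_identity:
  assumes e: "is_identity (free_product S I) e"
  obtains k z where "e = [(k, z)]" "k \<in> I" "is_identity (S k) z"
    "\<forall>j\<in>I. j \<noteq> k \<longrightarrow> carrier (S j) = {}"
proof -
  have e_in: "e \<in> fp_carrier S I"
    and e_id: "\<forall>x\<in>fp_carrier S I. fp_mult S e x = x \<and> fp_mult S x e = x"
    using e unfolding is_identity_def by auto
  have "length e + length e \<le> Suc (length (fp_mult S e e))" by (auto simp: fp_mult_def)
  moreover have "fp_mult S e e = e" "e \<noteq> []" using e_id e_in by (auto simp: fp_carrier_iff)
  ultimately obtain k z where e_eq: "e = [(k, z)]" by (cases e) auto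
  have kz: "k \<in> I" "z \<in> carrier (S k)" using e_in by (simp_all add: e_eq fp_carrier_iff)
  have "z \<otimes>\<^bsub>S k\<^esub> y = y \<and> y \<otimes>\<^bsub>S k\<^esub> z = y" if "y \<in> carrier (S k)" for y
  proof -
    have "[(k, y)] \<in> fp_carrier S I" using kz(1) that by (rule fp_carrier_singleton)
    then have "fp_mult S [(k, z)] [(k, y)] = [(k, y)]" "fp_mult S [(k, y)] [(k, z)] = [(k, y)]"
      using e_id unfolding e_eq by blast+
    then show ?thesis by (simp add: fp_mult_singleton)
  qed
  then have "is_identity (S k) z" unfolding is_identity_def using kz(2) by blast
  moreover have "carrier (S j) = {}" if "j \<in> I" "j \<noteq> k" for j
  proof (rule ccontr)
    assume "carrier (S j) \<noteq> {}"
    then obtain y where "y \<in> carrier (S j)" by blast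
    with \<open>j \<in> I\<close> have "[(j, y)] \<in> fp_carrier S I" by (rule fp_carrier_singleton)
    then have "fp_mult S [(k, z)] [(j, y)] = [(j, y)]" using e_id unfolding e_eq by blast
    then show False using \<open>j \<noteq> k\<close> by (simp add: fp_mult_def)
  qed
  ultimately show ?thesis using that e_eq kz(1) by blast
qed

lemma fp_carrier_single_factor:
  assumes w: "w \<in> fp_carrier S I" and k: "\<forall>j\<in>I. j \<noteq> k \<longrightarrow> carrier (S j) = {}"
  obtains y where "w = [(k, y)]" "y \<in> carrier (S k)"
proof -
  have k_only: "fst p = k" if "p \<in> set w" for p
    using w that k unfolding fp_carrier_iff letters_in_def by fastforce
  then obtain p v where "w = p # v" "fst p = k" using w by (metis fp_carrier_ConsE list.set_intros(1))
  moreover have "v = []"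
    using fp_carrier_tail[of p v S I] w k_only \<open>w = p # v\<close> \<open>fst p = k\<close> by (cases v) auto
  ultimately show ?thesis using that w unfolding fp_carrier_iff by (cases p) auto
qed

section \<open>Each factor is a retract of the free product\<close>

lemma retract_free_product_with_identity:
  assumes S: "\<forall>i\<in>I. is_semigroup (S i)" and e: "is_identity (free_product S I) e"
    and k: "k \<in> I" "is_identity (S k) z" "\<forall>j\<in>I. j \<noteq> k \<longrightarrow> carrier (S j) = {}"
  shows "monoid_retract (adjoin_one (free_product S I)) (adjoin_one (S k))
           (map_option (\<lambda>y. [(k, y)])) (map_option (\<lambda>w. snd (hd w)))"
    and "monoid_retract (adjoin_one (S k)) (adjoin_one (free_product S I))
           (map_option (\<lambda>w. snd (hd w))) (map_option (\<lambda>y. [(k, y)]))"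
proof -
  let ?F = "adjoin_one (free_product S I)" and ?N = "adjoin_one (S k)"
  let ?\<iota> = "map_option (\<lambda>y. [(k, y)])" and ?\<pi> = "map_option (\<lambda>w. snd (hd w))"
  have F: "monoid ?F" using S by (rule monoid_adjoin_one_free_product)
  have N: "monoid ?N" using S k(1) by (blast intro: monoid_adjoin_one)
  have carrier_F: "carrier ?F = Some ` fp_carrier S I" using adjoin_one_identity[OF e] by simp
  have carrier_N: "carrier ?N = Some ` carrier (S k)" using adjoin_one_identity[OF k(2)] by simp
  have F_elem: "\<exists>y. a = Some [(k, y)] \<and> y \<in> carrier (S k)" if a: "a \<in> carrier ?F" for a
  proof -
    obtain w where w: "a = Some w" "w \<in> fp_carrier S I" using a unfolding carrier_F by blast
    obtain y where "w = [(k, y)]" "y \<in> carrier (S k)" using fp_carrier_single_factor[OF w(2) k(3)] .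
    then show ?thesis using w(1) by blast
  qed
  have N_elem: "\<exists>y. a = Some y \<and> y \<in> carrier (S k)" if "a \<in> carrier ?N" for a
    using that unfolding carrier_N by blast
  have \<iota>: "?\<iota> a \<in> carrier ?F" if "a \<in> carrier ?N" for a
    using N_elem[OF that] carrier_F k(1) fp_carrier_singleton[of k I _ S] by auto
  have \<pi>: "?\<pi> a \<in> carrier ?N" if "a \<in> carrier ?F" for a
    using F_elem[OF that] by auto
  have \<iota>_mult: "?\<iota> (a \<otimes>\<^bsub>?N\<^esub> b) = ?\<iota> a \<otimes>\<^bsub>?F\<^esub> ?\<iota> b" if "a \<in> carrier ?N" "b \<in> carrier ?N" for a b
    using N_elem[OF that(1)] N_elem[OF that(2)] by (auto simp: fp_mult_singleton)
  have \<pi>_mult: "?\<pi> (a \<otimes>\<^bsub>?F\<^esub> b) = ?\<pi> a \<otimes>\<^bsub>?N\<^esub> ?\<pi> b" if "a \<in> carrier ?F" "b \<in> carrier ?F" for a b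
    using F_elem[OF that(1)] F_elem[OF that(2)] by (auto simp: fp_mult_singleton)
  have \<pi>_\<iota>: "?\<pi> (?\<iota> a) = a" for a by (cases a) auto
  have \<iota>_\<pi>: "?\<iota> (?\<pi> a) = a" if "a \<in> carrier ?F" for a
    using F_elem[OF that] by auto
  show "monoid_retract ?F ?N ?\<iota> ?\<pi>" by (rule monoid_retract.intro[OF F N \<iota> \<iota>_mult \<pi> \<pi>_mult \<pi>_\<iota>])
  show "monoid_retract ?N ?F ?\<pi> ?\<iota>" by (rule monoid_retract.intro[OF N F \<pi> \<pi>_mult \<iota> \<iota>_mult \<iota>_\<pi>])
qed

lemma retract_empty_factor:
  assumes "monoid M" "is_semigroup S" "carrier S = {}"
  shows "monoid_retract M (adjoin_one S) (\<lambda>_. \<one>\<^bsub>M\<^esub>) (\<lambda>_. None)"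
proof -
  have "\<nexists>e. is_identity S e" using assms(3) by (simp add: is_identity_def)
  then have N: "carrier (adjoin_one S) = {None}"
    using assms(3) adjoin_one_no_identity[of S] by simp
  show ?thesis
    by (rule monoid_retract.intro)
       (use assms(1) N monoid_adjoin_one[OF assms(2)] in \<open>simp_all add: monoid.l_one\<close>)
qed

definition letter_part :: "'i \<Rightarrow> 'i \<times> 'a \<Rightarrow> 'a option" where
  "letter_part i p = (if fst p = i then Some (snd p) else None)"

fun factor_part :: "('i \<Rightarrow> ('a, 'b) monoid_scheme) \<Rightarrow> 'i \<Rightarrow> ('i \<times> 'a) list \<Rightarrow> 'a option" where
  "factor_part S i [] = None"
| "factor_part S i (p # w) = letter_part i p \<otimes>\<^bsub>adjoin_one (S i)\<^esub> factor_part S i w"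

lemma letter_part_option_carrier:
  "snd p \<in> carrier (S (fst p)) \<Longrightarrow> letter_part i p \<in> option_carrier (S i)"
  by (cases p) (auto simp: letter_part_def option_carrier_def)

lemma letter_part_mult:
  "letter_part i (j, x \<otimes>\<^bsub>S j\<^esub> y) = letter_part i (j, x) \<otimes>\<^bsub>adjoin_one (S i)\<^esub> letter_part i (j, y)"
  by (auto simp: letter_part_def)

lemma factor_part_option_carrier:
  assumes "is_semigroup (S i)"
  shows "letters_in S I w \<Longrightarrow> factor_part S i w \<in> option_carrier (S i)"
proof (induction w)
  case (Cons p w)
  then show ?case
    using letter_part_option_carrier[of p S i] option_carrier_mult_closed[OF assms] by simp
qed (simp add: option_carrier_def)

lemma factor_part_append:
  assumes Si: "is_semigroup (S i)" and xs: "letters_in S I xs" and ys: "letters_in S I ys"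
  shows "factor_part S i (xs @ ys) = factor_part S i xs \<otimes>\<^bsub>adjoin_one (S i)\<^esub> factor_part S i ys"
  using xs
proof (induction xs)
  case (Cons p xs)
  then have "letter_part i p \<in> option_carrier (S i)" "factor_part S i xs \<in> option_carrier (S i)"
    "factor_part S i ys \<in> option_carrier (S i)"
    using letter_part_option_carrier[of p S i] factor_part_option_carrier[of S i, OF Si] ys by auto
  then show ?case using Cons by (simp add: option_carrier_mult_assoc[OF Si])
qed simp

lemma factor_part_fp_mult:
  assumes S: "\<forall>i\<in>I. is_semigroup (S i)" and i: "i \<in> I"
    and xs: "letters_in S I xs" and ys: "letters_in S I ys"
  shows "factor_part S i (fp_mult S xs ys) = factor_part S i xs \<otimes>\<^bsub>adjoin_one (S i)\<^esub> factor_part S i ys"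
proof (cases "xs = [] \<or> ys = []")
  case True then show ?thesis by auto
next
  case False
  then obtain a j x l y c where xe: "xs = a @ [(j, x)]" and ye: "ys = (l, y) # c"
    by (metis list.exhaust rev_exhaust surj_pair)
  have Si: "is_semigroup (S i)" using S i by blast
  let ?N = "adjoin_one (S i)"
  have a: "letters_in S I a" "j \<in> I" "x \<in> carrier (S j)" using xs xe by auto
  have c: "letters_in S I c" "l \<in> I" "y \<in> carrier (S l)" using ys ye by auto
  have in_option: "factor_part S i a \<in> option_carrier (S i)" "factor_part S i c \<in> option_carrier (S i)"
    "letter_part i (j, x) \<in> option_carrier (S i)" "letter_part i (l, y) \<in> option_carrier (S i)"
    using factor_part_option_carrier[of S i, OF Si] letter_part_option_carrier a c by auto
  have xs_part: "factor_part S i xs = factor_part S i a \<otimes>\<^bsub>?N\<^esub> letter_part i (j, x)"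
    using factor_part_append[OF Si a(1), of "[(j, x)]"] a unfolding xe by simp
  have ys_part: "factor_part S i ys = letter_part i (l, y) \<otimes>\<^bsub>?N\<^esub> factor_part S i c"
    unfolding ye by simp
  show ?thesis
  proof (cases "j = l")
    case True
    have "x \<otimes>\<^bsub>S j\<^esub> y \<in> carrier (S j)" using S a c True unfolding is_semigroup_def by blast
    then have "factor_part S i (fp_mult S xs ys) =
        factor_part S i a \<otimes>\<^bsub>?N\<^esub> ((letter_part i (j, x) \<otimes>\<^bsub>?N\<^esub> letter_part i (l, y)) \<otimes>\<^bsub>?N\<^esub> factor_part S i c)"
      using factor_part_append[OF Si a(1), of "(j, x \<otimes>\<^bsub>S j\<^esub> y) # c"] a c True
      unfolding xe ye fp_mult_snoc_Cons by (simp add: letter_part_mult[of i l S x y])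
    also have "\<dots> = factor_part S i xs \<otimes>\<^bsub>?N\<^esub> factor_part S i ys"
      unfolding xs_part ys_part
      using in_option option_carrier_mult_assoc[OF Si] option_carrier_mult_closed[OF Si] by metis
    finally show ?thesis .
  next
    case False
    then show ?thesis
      using factor_part_append[OF Si xs ys] unfolding xe ye fp_mult_snoc_Cons by simp
  qed
qed

text \<open>Multiplying by the identity of \<open>S\<^sub>i\<^sup>1\<close> sends \<open>None\<close> to that identity when \<open>S\<^sub>i\<close> has one.\<close>

definition factor_projection :: "('i \<Rightarrow> ('a, 'b) monoid_scheme) \<Rightarrow> 'i \<Rightarrow> ('i \<times> 'a) list option \<Rightarrow> 'a option" where
  "factor_projection S i b =
     (case b of None \<Rightarrow> None | Some w \<Rightarrow> factor_part S i w) \<otimes>\<^bsub>adjoin_one (S i)\<^esub> \<one>\<^bsub>adjoin_one (S i)\<^esub>"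

lemma retract_free_product_no_identity:
  assumes S: "\<forall>i\<in>I. is_semigroup (S i)" and i: "i \<in> I"
    and no_id: "\<nexists>e. is_identity (free_product S I) e"
  shows "monoid_retract (adjoin_one (free_product S I)) (adjoin_one (S i))
           (map_option (\<lambda>y. [(i, y)])) (factor_projection S i)"
proof -
  let ?M = "adjoin_one (free_product S I)" and ?N = "adjoin_one (S i)"
  let ?\<iota> = "map_option (\<lambda>y. [(i, y)])"
  define Q where "Q b = (case b of None \<Rightarrow> None | Some w \<Rightarrow> factor_part S i w)" for b
  have Si: "is_semigroup (S i)" using S i by blast
  have carrier_M: "carrier ?M = insert None (Some ` fp_carrier S I)"
    using adjoin_one_no_identity[OF no_id] by simp
  have projection: "factor_projection S i b = Q b \<otimes>\<^bsub>?N\<^esub> \<one>\<^bsub>?N\<^esub>" for b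
    unfolding factor_projection_def Q_def ..
  have Q_in: "Q b \<in> option_carrier (S i)" if "b \<in> carrier ?M" for b
  proof (cases b)
    case (Some w)
    then have "letters_in S I w" using that fp_carrier_letters_in unfolding carrier_M by auto
    then show ?thesis using factor_part_option_carrier[of S i, OF Si] Some unfolding Q_def by simp
  qed (simp add: Q_def option_carrier_def)
  have Q_mult: "Q (a \<otimes>\<^bsub>?M\<^esub> b) = Q a \<otimes>\<^bsub>?N\<^esub> Q b" if "a \<in> carrier ?M" "b \<in> carrier ?M" for a b
    using that factor_part_fp_mult[OF S i] fp_carrier_letters_in[of _ S I]
    unfolding carrier_M Q_def by (cases a; cases b) auto
  have one: "\<one>\<^bsub>?N\<^esub> \<in> option_carrier (S i)"
    using adjoin_one_one_closed adjoin_one_subset_option_carrier by blast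
  have \<iota>: "?\<iota> a \<in> carrier ?M" if "a \<in> carrier ?N" for a
    using that adjoin_one_subset_option_carrier[of "S i"] i
    unfolding carrier_M option_carrier_def by (auto intro: fp_carrier_singleton)
  have \<iota>_mult: "?\<iota> (a \<otimes>\<^bsub>?N\<^esub> b) = ?\<iota> a \<otimes>\<^bsub>?M\<^esub> ?\<iota> b"
    if "a \<in> carrier ?N" "b \<in> carrier ?N" for a b
    by (cases a; cases b) (auto simp: fp_mult_singleton)
  have \<pi>: "factor_projection S i a \<in> carrier ?N" if "a \<in> carrier ?M" for a
    unfolding projection using adjoin_one_r_one_closed Q_in[OF that] by blast
  have \<pi>_mult: "factor_projection S i (a \<otimes>\<^bsub>?M\<^esub> b) =
      factor_projection S i a \<otimes>\<^bsub>?N\<^esub> factor_projection S i b"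
    if "a \<in> carrier ?M" "b \<in> carrier ?M" for a b
  proof -
    have Qa: "Q a \<in> option_carrier (S i)" and Qb: "Q b \<in> option_carrier (S i)" using Q_in that by auto
    have Qb1: "Q b \<otimes>\<^bsub>?N\<^esub> \<one>\<^bsub>?N\<^esub> \<in> carrier ?N" using adjoin_one_r_one_closed[OF Qb] .
    have "factor_projection S i a \<otimes>\<^bsub>?N\<^esub> factor_projection S i b =
        Q a \<otimes>\<^bsub>?N\<^esub> (\<one>\<^bsub>?N\<^esub> \<otimes>\<^bsub>?N\<^esub> (Q b \<otimes>\<^bsub>?N\<^esub> \<one>\<^bsub>?N\<^esub>))"
      unfolding projection
      using option_carrier_mult_assoc[OF Si Qa one] option_carrier_mult_closed[OF Si Qb one] by simp
    also have "\<dots> = Q a \<otimes>\<^bsub>?N\<^esub> (Q b \<otimes>\<^bsub>?N\<^esub> \<one>\<^bsub>?N\<^esub>)" using adjoin_one_l_one[OF Qb1] by simp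
    also have "\<dots> = factor_projection S i (a \<otimes>\<^bsub>?M\<^esub> b)"
      unfolding projection Q_mult[OF that] using option_carrier_mult_assoc[OF Si Qa Qb one] by simp
    finally show ?thesis by simp
  qed
  have \<pi>_\<iota>: "factor_projection S i (?\<iota> a) = a" if "a \<in> carrier ?N" for a
  proof (cases a)
    case None
    then have "\<nexists>e. is_identity (S i) e" using that None_in_adjoin_one_iff by metis
    then show ?thesis using None adjoin_one_no_identity unfolding factor_projection_def by simp
  next
    case (Some y)
    then show ?thesis
      using adjoin_one_r_one[OF that] unfolding factor_projection_def by (simp add: letter_part_def)
  qed
  show ?thesis
    by (rule monoid_retract.intro[OF monoid_adjoin_one_free_product[OF S] monoid_adjoin_one[OF Si]
          \<iota> \<iota>_mult \<pi> \<pi>_mult \<pi>_\<iota>])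
qed

lemma weakly_right_coherent_factor:
  assumes S: "\<forall>i\<in>I. is_semigroup (S i)" and i: "i \<in> I"
    and F: "weakly_right_coherent (adjoin_one (free_product S I))"
  shows "weakly_right_coherent (adjoin_one (S i))"
proof (cases "\<exists>e. is_identity (free_product S I) e")
  case True
  then obtain e where e: "is_identity (free_product S I) e" ..
  then obtain k z where kz: "k \<in> I" "is_identity (S k) z" "\<forall>j\<in>I. j \<noteq> k \<longrightarrow> carrier (S j) = {}"
    by (rule free_product_identity)
  show ?thesis
  proof (cases "i = k")
    case True
    then show ?thesis
      using monoid_retract.weakly_right_coherent_retract[
          OF retract_free_product_with_identity(1)[OF S e kz] F] by simp
  next
    case False
    then have "carrier (S i) = {}" using kz(3) i by blast
    then show ?thesis
      using monoid_retract.weakly_right_coherent_retract[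
          OF retract_empty_factor[OF monoid_adjoin_one_free_product[OF S]] F] S i by blast
  qed
next
  case False
  show ?thesis
    using monoid_retract.weakly_right_coherent_retract[
        OF retract_free_product_no_identity[OF S i False] F] .
qed

section \<open>Products in the free product with an identity adjoined\<close>

definition head_in :: "'i \<Rightarrow> ('i \<times> 'a) list option \<Rightarrow> 'a option" where
  "head_in i b = (case b of Some ((j, y) # v) \<Rightarrow> if j = i then Some y else None | _ \<Rightarrow> None)"

definition rest_after :: "'i \<Rightarrow> ('i \<times> 'a) list option \<Rightarrow> ('i \<times> 'a) list" where
  "rest_after i b = (case b of Some ((j, y) # v) \<Rightarrow> if j = i then v else (j, y) # v | _ \<Rightarrow> [])"

definition mult_opt :: "('i \<Rightarrow> ('a, 'b) monoid_scheme) \<Rightarrow> 'i \<Rightarrow> 'a \<Rightarrow> 'a option \<Rightarrow> 'a" where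
  "mult_opt S i x h = (case h of None \<Rightarrow> x | Some y \<Rightarrow> x \<otimes>\<^bsub>S i\<^esub> y)"

definition word_elem :: "('i \<times> 'a) list \<Rightarrow> ('i \<times> 'a) list option" where
  "word_elem v = (if v = [] then None else Some v)"

definition letter_elem :: "'i \<Rightarrow> 'a option \<Rightarrow> ('i \<times> 'a) list option" where
  "letter_elem i p = map_option (\<lambda>y. [(i, y)]) p"

lemma Some_mult_opt: "Some (mult_opt S i x h) = Some x \<otimes>\<^bsub>adjoin_one (S i)\<^esub> h"
  unfolding mult_opt_def by (cases h) auto

lemma head_in_letter_elem [simp]: "head_in i (letter_elem i p) = p"
  unfolding head_in_def letter_elem_def by (cases p) auto

lemma rest_after_letter_elem [simp]: "rest_after i (letter_elem i p) = []"
  unfolding rest_after_def letter_elem_def by (cases p) auto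

locale free_product_without_identity =
  fixes S :: "'i \<Rightarrow> ('a, 'b) monoid_scheme" and I :: "'i set"
  assumes semigroups: "\<forall>i\<in>I. is_semigroup (S i)"
    and no_identity: "\<nexists>e. is_identity (free_product S I) e"
begin

abbreviation F1 where "F1 \<equiv> adjoin_one (free_product S I)"

lemma carrier_F1: "carrier F1 = insert None (Some ` fp_carrier S I)"
  using adjoin_one_no_identity[OF no_identity] by simp

lemma monoid_F1: "monoid F1"
  using semigroups by (rule monoid_adjoin_one_free_product)

lemma None_in_F1: "None \<in> carrier F1"
  by (simp add: carrier_F1)

lemma Some_in_F1_iff: "Some w \<in> carrier F1 \<longleftrightarrow> w \<in> fp_carrier S I"
  by (auto simp: carrier_F1)

definition avoids_head :: "'i \<Rightarrow> ('i \<times> 'a) list \<Rightarrow> bool" where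
  "avoids_head i v \<longleftrightarrow> v = [] \<or> v \<in> fp_carrier S I \<and> fst (hd v) \<noteq> i"

lemma F1_mult_snoc:
  assumes b: "b \<in> carrier F1"
  shows "Some (u @ [(i, x)]) \<otimes>\<^bsub>F1\<^esub> b = Some (u @ (i, mult_opt S i x (head_in i b)) # rest_after i b)"
proof (cases b)
  case (Some w)
  then obtain j y v where "w = (j, y) # v" using b Some_in_F1_iff fp_carrier_ConsE by metis
  then show ?thesis
    using Some by (simp add: fp_mult_snoc_Cons head_in_def rest_after_def mult_opt_def)
qed (simp add: head_in_def rest_after_def mult_opt_def)

lemma avoids_head_rest_after:
  assumes b: "b \<in> carrier F1"
  shows "avoids_head i (rest_after i b)"
proof (cases b)
  case (Some w)
  then have w: "w \<in> fp_carrier S I" using b Some_in_F1_iff by simp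
  then obtain j y v where "w = (j, y) # v" by (rule fp_carrier_ConsE)
  then show ?thesis
    using Some w fp_carrier_tail[of "(j, y)" v S I]
    by (auto simp: rest_after_def avoids_head_def)
qed (simp add: rest_after_def avoids_head_def)

lemma word_elem_in_F1: "avoids_head i v \<Longrightarrow> word_elem v \<in> carrier F1"
  unfolding avoids_head_def word_elem_def by (auto simp: carrier_F1)

lemma head_in_option_carrier:
  assumes b: "b \<in> carrier F1"
  shows "head_in i b \<in> option_carrier (S i)"
proof (cases b)
  case (Some w)
  then have w: "w \<in> fp_carrier S I" using b Some_in_F1_iff by simp
  then obtain j y v where "w = (j, y) # v" by (rule fp_carrier_ConsE)
  then show ?thesis using Some w by (auto simp: head_in_def option_carrier_def fp_carrier_iff)
qed (simp add: head_in_def option_carrier_def)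

lemma letter_elem_in_F1: "i \<in> I \<Longrightarrow> p \<in> option_carrier (S i) \<Longrightarrow> letter_elem i p \<in> carrier F1"
  unfolding letter_elem_def option_carrier_def by (auto simp: carrier_F1 intro: fp_carrier_singleton)

lemma letter_elem_mult:
  "letter_elem i (p \<otimes>\<^bsub>adjoin_one (S i)\<^esub> q) = letter_elem i p \<otimes>\<^bsub>F1\<^esub> letter_elem i q"
  unfolding letter_elem_def by (cases p; cases q) (auto simp: fp_mult_singleton)

lemma F1_mult_word_elem:
  assumes "avoids_head i v"
  shows "Some (u @ [(i, z)]) \<otimes>\<^bsub>F1\<^esub> word_elem v = Some (u @ (i, z) # v)"
proof (cases v)
  case (Cons p c)
  then show ?thesis
    using assms fp_mult_snoc_Cons[of S u i z "fst p" "snd p" c]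
    by (cases p) (auto simp: word_elem_def avoids_head_def)
qed (simp add: word_elem_def)

lemma letter_elem_head_mult_rest:
  assumes b: "b \<in> carrier F1"
  shows "letter_elem i (head_in i b) \<otimes>\<^bsub>F1\<^esub> word_elem (rest_after i b) = b"
proof (cases b)
  case (Some w)
  then have w: "w \<in> fp_carrier S I" using b Some_in_F1_iff by simp
  then obtain j y v where we: "w = (j, y) # v" by (rule fp_carrier_ConsE)
  show ?thesis
  proof (cases "j = i")
    case True
    have "avoids_head i v" using fp_carrier_tail[of "(j, y)" v S I] w we True
      unfolding avoids_head_def by auto
    then have "Some ([] @ [(i, y)]) \<otimes>\<^bsub>F1\<^esub> word_elem v = Some ([] @ (i, y) # v)"
      by (rule F1_mult_word_elem)
    then show ?thesis using Some we True by (simp add: head_in_def rest_after_def letter_elem_def)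
  qed (use Some we in \<open>simp add: head_in_def rest_after_def letter_elem_def word_elem_def\<close>)
qed (simp add: head_in_def rest_after_def letter_elem_def word_elem_def)

text \<open>When \<open>S\<^sub>i\<close> has an identity, a missing leading letter from \<open>S\<^sub>i\<close> acts like that identity.\<close>

definition head_unit :: "'i \<Rightarrow> ('i \<times> 'a) list option \<Rightarrow> 'a option" where
  "head_unit i b = (if head_in i b \<in> carrier (adjoin_one (S i)) then head_in i b
                    else \<one>\<^bsub>adjoin_one (S i)\<^esub>)"

lemma head_unit_in: "head_unit i b \<in> carrier (adjoin_one (S i))"
  unfolding head_unit_def using adjoin_one_one_closed by auto

lemma Some_mult_head_unit:
  assumes x: "x \<in> carrier (S i)" and b: "b \<in> carrier F1"
  shows "Some x \<otimes>\<^bsub>adjoin_one (S i)\<^esub> head_unit i b = Some (mult_opt S i x (head_in i b))"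
proof (cases "head_in i b \<in> carrier (adjoin_one (S i))")
  case False
  then have "head_in i b = None"
    using option_carrier_not_in_adjoin_one head_in_option_carrier[OF b] by blast
  then show ?thesis
    using False adjoin_one_r_one[of "Some x"] x unfolding head_unit_def mult_opt_def by simp
qed (simp add: head_unit_def Some_mult_opt)

lemma fg_act_kernel_F1_None: "fg_right_cong_free F1 1 (act_kernel F1 [None])"
proof -
  have "act_kernel F1 [None] \<subseteq> cong_gen_free F1 1 {}"
  proof
    fix p assume "p \<in> act_kernel F1 [None]"
    then obtain s where "p = ((0, s), (0, s))" "s \<in> carrier F1"
      by (cases p) (auto simp: act_kernel_singleton prod_eq_iff)
    then show "p \<in> cong_gen_free F1 1 {}"
      using right_cong_free_refl[OF right_cong_free_cong_gen[OF monoid_F1, of "{}" 1]]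
      by (simp add: free_act_iff)
  qed
  then show ?thesis using fg_act_kernelI[OF monoid_F1, of "[None]" "{}"] None_in_F1 by simp
qed

lemma letter_elem_in_F1_adjoin_one:
  "i \<in> I \<Longrightarrow> p \<in> carrier (adjoin_one (S i)) \<Longrightarrow> letter_elem i p \<in> carrier F1"
  using letter_elem_in_F1 adjoin_one_subset_option_carrier by blast

lemma F1_mult_letter_elem:
  assumes "i \<in> I" "p \<in> carrier (adjoin_one (S i))"
  shows "Some (u @ [(i, x)]) \<otimes>\<^bsub>F1\<^esub> letter_elem i p = Some (u @ [(i, mult_opt S i x p)])"
  using F1_mult_snoc[OF letter_elem_in_F1_adjoin_one[OF assms], of u i x] by simp

lemma act_kernel_F1_word_letters:
  assumes w: "u @ [(i, x)] \<in> fp_carrier S I"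
    and ab: "(a, b) \<in> act_kernel (adjoin_one (S i)) [Some x]"
  shows "((0, letter_elem i (snd a)), (0, letter_elem i (snd b))) \<in> act_kernel F1 [Some (u @ [(i, x)])]"
proof -
  have i: "i \<in> I" using w unfolding fp_carrier_iff by simp
  have ab': "snd a \<in> carrier (adjoin_one (S i))" "snd b \<in> carrier (adjoin_one (S i))"
    and eq: "Some x \<otimes>\<^bsub>adjoin_one (S i)\<^esub> snd a = Some x \<otimes>\<^bsub>adjoin_one (S i)\<^esub> snd b"
    using ab unfolding act_kernel_singleton by auto
  have "mult_opt S i x (snd a) = mult_opt S i x (snd b)" using eq by (metis Some_mult_opt option.inject)
  then show ?thesis
    using ab' F1_mult_letter_elem[OF i] letter_elem_in_F1_adjoin_one[OF i]
    unfolding act_kernel_singleton by simp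
qed

lemma act_kernel_F1_word_None:
  assumes w: "u @ [(i, x)] \<in> fp_carrier S I"
  shows "((0, None), (0, letter_elem i \<one>\<^bsub>adjoin_one (S i)\<^esub>)) \<in> act_kernel F1 [Some (u @ [(i, x)])]"
proof -
  have i: "i \<in> I" and x: "x \<in> carrier (S i)" using w unfolding fp_carrier_iff by auto
  have "Some (mult_opt S i x \<one>\<^bsub>adjoin_one (S i)\<^esub>) = Some x"
    unfolding Some_mult_opt using adjoin_one_r_one[of "Some x" "S i"] x by simp
  then show ?thesis
    using F1_mult_letter_elem[OF i adjoin_one_one_closed]
      letter_elem_in_F1_adjoin_one[OF i adjoin_one_one_closed] None_in_F1
    unfolding act_kernel_singleton by simp
qed

text \<open>Two right multiples of \<open>u x\<close> agree iff the multipliers have the same rest and equal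
  \<open>x\<close>-multiples of their leading \<open>S\<^sub>i\<close>-letters.\<close>

lemma act_kernel_F1_word_subset:
  assumes w: "u @ [(i, x)] \<in> fp_carrier S I" and \<rho>: "right_cong_free F1 1 \<rho>"
    and None_\<rho>: "((0, None), (0, letter_elem i \<one>\<^bsub>adjoin_one (S i)\<^esub>)) \<in> \<rho>"
    and letters_\<rho>: "\<And>a b. (a, b) \<in> act_kernel (adjoin_one (S i)) [Some x] \<Longrightarrow>
        ((0, letter_elem i (snd a)), (0, letter_elem i (snd b))) \<in> \<rho>"
  shows "act_kernel F1 [Some (u @ [(i, x)])] \<subseteq> \<rho>"
proof
  let ?N = "adjoin_one (S i)" and ?\<alpha> = "Some (u @ [(i, x)])"
  have i: "i \<in> I" and x: "x \<in> carrier (S i)" using w unfolding fp_carrier_iff by auto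
  have head_unit_\<rho>: "((0, letter_elem i (head_in i b)), (0, letter_elem i (head_unit i b))) \<in> \<rho>"
    if b: "b \<in> carrier F1" for b
  proof (cases "head_in i b \<in> carrier ?N")
    case True
    then show ?thesis
      unfolding head_unit_def using right_cong_free_refl[OF \<rho>] letter_elem_in_F1_adjoin_one[OF i]
      by (simp add: free_act_iff)
  next
    case False
    then have "head_in i b = None"
      using option_carrier_not_in_adjoin_one head_in_option_carrier[OF b] by blast
    then show ?thesis using False None_\<rho> unfolding head_unit_def by (simp add: letter_elem_def)
  qed
  fix q assume "q \<in> act_kernel F1 [?\<alpha>]"
  then obtain \<beta> \<gamma> where q: "q = ((0, \<beta>), (0, \<gamma>))" and \<beta>\<gamma>: "\<beta> \<in> carrier F1" "\<gamma> \<in> carrier F1"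
    and eq: "?\<alpha> \<otimes>\<^bsub>F1\<^esub> \<beta> = ?\<alpha> \<otimes>\<^bsub>F1\<^esub> \<gamma>"
    by (cases q) (auto simp: act_kernel_singleton)
  have eq_head: "mult_opt S i x (head_in i \<beta>) = mult_opt S i x (head_in i \<gamma>)"
    and eq_rest: "rest_after i \<beta> = rest_after i \<gamma>"
    using eq unfolding F1_mult_snoc[OF \<beta>\<gamma>(1)] F1_mult_snoc[OF \<beta>\<gamma>(2)] by auto
  have "((0, head_unit i \<beta>), (0, head_unit i \<gamma>)) \<in> act_kernel ?N [Some x]"
    using eq_head Some_mult_head_unit[OF x] \<beta>\<gamma> head_unit_in unfolding act_kernel_singleton by simp
  from letters_\<rho>[OF this]
  have "((0, letter_elem i (head_unit i \<beta>)), (0, letter_elem i (head_unit i \<gamma>))) \<in> \<rho>" by simp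
  then have "((0, letter_elem i (head_in i \<beta>)), (0, letter_elem i (head_in i \<gamma>))) \<in> \<rho>"
    using head_unit_\<rho>[OF \<beta>\<gamma>(1)] head_unit_\<rho>[OF \<beta>\<gamma>(2)]
      right_cong_free_trans[OF \<rho>] right_cong_free_sym[OF \<rho>] by meson
  from right_cong_free_act[OF \<rho> this word_elem_in_F1[OF avoids_head_rest_after[OF \<beta>\<gamma>(1)]]]
  show "q \<in> \<rho>"
    unfolding q using letter_elem_head_mult_rest \<beta>\<gamma> eq_rest by metis
qed

lemma fg_act_kernel_F1_word:
  assumes w: "u @ [(i, x)] \<in> fp_carrier S I"
    and fg: "fg_right_cong_free (adjoin_one (S i)) 1 (act_kernel (adjoin_one (S i)) [Some x])"
  shows "fg_right_cong_free F1 1 (act_kernel F1 [Some (u @ [(i, x)])])"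
proof -
  let ?N = "adjoin_one (S i)" and ?\<alpha> = "Some (u @ [(i, x)])"
  have i: "i \<in> I" using w unfolding fp_carrier_iff by simp
  have \<alpha>: "?\<alpha> \<in> carrier F1" using w by (simp add: Some_in_F1_iff)
  have N: "monoid ?N" using semigroups i by (blast intro: monoid_adjoin_one)
  obtain HN where HN: "finite HN" "HN \<subseteq> free_act ?N 1 \<times> free_act ?N 1"
    "act_kernel ?N [Some x] = cong_gen_free ?N 1 HN"
    using fg unfolding fg_right_cong_free_def by blast
  define \<theta> where "\<theta> z = (fst z, letter_elem i (snd z))" for z :: "nat \<times> 'a option"
  define G where "G = (\<lambda>(a, b). (\<theta> a, \<theta> b)) ` HN \<union> {((0, None), (0, letter_elem i \<one>\<^bsub>?N\<^esub>))}"
  define \<rho> where "\<rho> = cong_gen_free F1 1 G"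
  have \<theta>_zero: "\<theta> a = (0, letter_elem i (snd a))" if "a \<in> free_act ?N 1" for a
    using that unfolding \<theta>_def by (simp add: free_act_iff)
  have G_kernel: "G \<subseteq> act_kernel F1 [?\<alpha>]"
    unfolding G_def
  proof (intro Un_least image_subsetI, unfold case_prod_beta)
    fix q assume "q \<in> HN"
    then have "(fst q, snd q) \<in> act_kernel ?N [Some x]" using HN(3) cong_gen_free_incl by fastforce
    moreover have "fst q \<in> free_act ?N 1" "snd q \<in> free_act ?N 1" using \<open>q \<in> HN\<close> HN(2) by auto
    ultimately show "(\<theta> (fst q), \<theta> (snd q)) \<in> act_kernel F1 [?\<alpha>]"
      using act_kernel_F1_word_letters[OF w] \<theta>_zero by simp
  qed (use act_kernel_F1_word_None[OF w] in simp)
  have \<rho>: "right_cong_free F1 1 \<rho>"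
    using right_cong_free_cong_gen[OF monoid_F1] G_kernel
      right_cong_free_subset[OF right_cong_free_act_kernel[OF monoid_F1, of "[?\<alpha>]"]] \<alpha>
    unfolding \<rho>_def by auto
  have G_\<rho>: "G \<subseteq> \<rho>" unfolding \<rho>_def by (rule cong_gen_free_incl)
  have "((0, letter_elem i (snd a)), (0, letter_elem i (snd b))) \<in> \<rho>"
    if "(a, b) \<in> act_kernel ?N [Some x]" for a b
  proof -
    have HN_\<rho>: "(\<theta> a, \<theta> b) \<in> \<rho>" if "(a, b) \<in> HN" for a b
      using that G_\<rho> unfolding G_def by blast
    have \<theta>_act: "\<theta> (fst z, snd z \<otimes>\<^bsub>?N\<^esub> s) = (fst (\<theta> z), snd (\<theta> z) \<otimes>\<^bsub>F1\<^esub> letter_elem i s) \<and>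
        letter_elem i s \<in> carrier F1" if "z \<in> free_act ?N 1" "s \<in> carrier ?N" for z s
      using letter_elem_mult letter_elem_in_F1_adjoin_one[OF i that(2)] unfolding \<theta>_def by simp
    have \<theta>_free: "\<theta> z \<in> free_act F1 1" if "z \<in> free_act ?N 1" for z
      using that letter_elem_in_F1_adjoin_one[OF i] unfolding \<theta>_def by (simp add: free_act_iff)
    have "(a, b) \<in> cong_gen_free ?N 1 HN" using that HN(3) by simp
    from cong_gen_free_map[OF N HN(2) \<rho> \<theta>_free \<theta>_act HN_\<rho> this]
    show ?thesis using that unfolding \<theta>_def act_kernel_singleton by simp
  qed
  moreover have "((0, None), (0, letter_elem i \<one>\<^bsub>?N\<^esub>)) \<in> \<rho>" using G_\<rho> unfolding G_def by blast
  ultimately have "act_kernel F1 [?\<alpha>] \<subseteq> \<rho>" by (intro act_kernel_F1_word_subset[OF w \<rho>])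
  moreover have "finite G" unfolding G_def using HN(1) by simp
  ultimately show ?thesis
    using fg_act_kernelI[OF monoid_F1, of "[?\<alpha>]" G] G_kernel \<alpha> unfolding \<rho>_def by simp
qed

lemma finitely_right_equated_F1:
  assumes "\<forall>i\<in>I. finitely_right_equated (adjoin_one (S i))"
  shows "finitely_right_equated F1"
  unfolding finitely_right_equated_def
proof
  fix \<alpha> assume \<alpha>: "\<alpha> \<in> carrier F1"
  show "fg_right_cong_free F1 1 (act_kernel F1 [\<alpha>])"
  proof (cases \<alpha>)
    case None then show ?thesis using fg_act_kernel_F1_None by simp
  next
    case (Some w)
    then have "w \<in> fp_carrier S I" using \<alpha> Some_in_F1_iff by simp
    then obtain u i x where w: "w = u @ [(i, x)]" "i \<in> I" "x \<in> carrier (S i)"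
      by (rule fp_carrier_snocE)
    then show ?thesis
      using fg_act_kernel_F1_word[of u i x] assms Some \<alpha> Some_in_F1_iff
      unfolding finitely_right_equated_def by simp
  qed
qed

lemma right_ideal_span_F1_word:
  assumes w: "u @ [(i, x)] \<in> fp_carrier S I"
  shows "z \<in> right_ideal_span F1 {Some (u @ [(i, x)])} \<longleftrightarrow>
    (\<exists>y v. Some y \<in> right_ideal_span (adjoin_one (S i)) {Some x} \<and> avoids_head i v \<and>
       z = Some (u @ (i, y) # v))"
    (is "?lhs \<longleftrightarrow> ?rhs")
proof
  let ?N = "adjoin_one (S i)" and ?\<alpha> = "Some (u @ [(i, x)])"
  have i: "i \<in> I" and x: "x \<in> carrier (S i)" using w unfolding fp_carrier_iff by auto
  show "?lhs \<Longrightarrow> ?rhs"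
  proof -
    assume ?lhs
    then obtain b where b: "b \<in> carrier F1" "z = ?\<alpha> \<otimes>\<^bsub>F1\<^esub> b"
      unfolding right_ideal_span_singleton by blast
    have "Some (mult_opt S i x (head_in i b)) \<in> right_ideal_span ?N {Some x}"
      using Some_mult_head_unit[OF x b(1)] head_unit_in unfolding right_ideal_span_singleton by metis
    then show ?rhs using b F1_mult_snoc avoids_head_rest_after by blast
  qed
  show "?rhs \<Longrightarrow> ?lhs"
  proof -
    assume ?rhs
    then obtain y v p where v: "avoids_head i v" and z: "z = Some (u @ (i, y) # v)"
      and p: "p \<in> carrier ?N" "Some y = Some x \<otimes>\<^bsub>?N\<^esub> p"
      unfolding right_ideal_span_singleton by blast
    have letter_in: "letter_elem i p \<in> carrier F1" using letter_elem_in_F1_adjoin_one[OF i p(1)] .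
    have "mult_opt S i x p = y" using p(2) Some_mult_opt by (metis option.inject)
    then have "?\<alpha> \<otimes>\<^bsub>F1\<^esub> letter_elem i p = Some (u @ [(i, y)])"
      using F1_mult_letter_elem[OF i p(1)] by simp
    then have "z = (?\<alpha> \<otimes>\<^bsub>F1\<^esub> letter_elem i p) \<otimes>\<^bsub>F1\<^esub> word_elem v"
      using F1_mult_word_elem[OF v] z by simp
    also have "\<dots> = ?\<alpha> \<otimes>\<^bsub>F1\<^esub> (letter_elem i p \<otimes>\<^bsub>F1\<^esub> word_elem v)"
      using monoid.m_assoc[OF monoid_F1] w letter_in word_elem_in_F1[OF v] by (simp add: Some_in_F1_iff)
    finally show ?lhs
      using monoid.m_closed[OF monoid_F1 letter_in word_elem_in_F1[OF v]]
      unfolding right_ideal_span_singleton by blast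
  qed
qed

lemma right_ideal_span_adjoin_one_Some:
  "c \<in> right_ideal_span (adjoin_one T) {Some x} \<Longrightarrow> \<exists>c0. c = Some c0"
proof -
  assume "c \<in> right_ideal_span (adjoin_one T) {Some x}"
  then obtain s where "c = Some x \<otimes>\<^bsub>adjoin_one T\<^esub> s" unfolding right_ideal_span_singleton by blast
  then show ?thesis by (cases s) auto
qed

lemma fg_principal_meet_F1_same_prefix:
  assumes H: "principal_right_ideal_Howson (adjoin_one (S i))"
    and a: "u @ [(i, x)] \<in> fp_carrier S I" and b: "u @ [(i, y)] \<in> fp_carrier S I"
  shows "fg_principal_meet F1 (Some (u @ [(i, x)])) (Some (u @ [(i, y)]))"
proof -
  let ?N = "adjoin_one (S i)" and ?\<alpha> = "Some (u @ [(i, x)])" and ?\<beta> = "Some (u @ [(i, y)])"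
  have i: "i \<in> I" and x: "x \<in> carrier (S i)" and y: "y \<in> carrier (S i)"
    using a b unfolding fp_carrier_iff by auto
  have N: "monoid ?N" using semigroups i by (blast intro: monoid_adjoin_one)
  obtain Y where Y: "finite Y" "Y \<subseteq> carrier ?N"
    and Y_eq: "right_ideal_span ?N {Some x} \<inter> right_ideal_span ?N {Some y} = right_ideal_span ?N Y"
  proof -
    have "fg_principal_meet ?N (Some x) (Some y)"
      using H x y unfolding principal_right_ideal_Howson_def by simp
    then show ?thesis using that unfolding fg_principal_meet_def by meson
  qed
  have Y_Some: "\<exists>c0. c = Some c0 \<and> Some c0 \<in> right_ideal_span ?N {Some x} \<and>
      Some c0 \<in> right_ideal_span ?N {Some y}" if "c \<in> Y" for c
  proof -
    have "c \<in> right_ideal_span ?N Y" using right_ideal_span_incl[OF N Y(2)] that by (rule subsetD)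
    then have c: "c \<in> right_ideal_span ?N {Some x}" "c \<in> right_ideal_span ?N {Some y}"
      unfolding Y_eq[symmetric] by simp_all
    moreover obtain c0 where "c = Some c0" using right_ideal_span_adjoin_one_Some[OF c(1)] by blast
    ultimately show ?thesis by simp
  qed
  define emb where "emb c = Some (u @ [(i, the c)])" for c
  have emb_\<alpha>\<beta>: "emb ` Y \<subseteq> right_ideal_span F1 {?\<alpha>} \<inter> right_ideal_span F1 {?\<beta>}"
  proof
    fix e assume "e \<in> emb ` Y"
    then obtain c where c: "c \<in> Y" "e = emb c" by blast
    obtain c0 where c0: "c = Some c0" "Some c0 \<in> right_ideal_span ?N {Some x}"
      "Some c0 \<in> right_ideal_span ?N {Some y}"
      using Y_Some[OF c(1)] by blast
    have "e = Some (u @ [(i, c0)])" using c(2) c0(1) unfolding emb_def by simp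
    moreover have "avoids_head i []" by (simp add: avoids_head_def)
    ultimately show "e \<in> right_ideal_span F1 {?\<alpha>} \<inter> right_ideal_span F1 {?\<beta>}"
      unfolding Int_iff right_ideal_span_F1_word[OF a] right_ideal_span_F1_word[OF b]
      using c0 by blast
  qed
  have "right_ideal_span F1 {?\<alpha>} \<inter> right_ideal_span F1 {?\<beta>} = right_ideal_span F1 (emb ` Y)"
  proof
    show "right_ideal_span F1 {?\<alpha>} \<inter> right_ideal_span F1 {?\<beta>} \<subseteq> right_ideal_span F1 (emb ` Y)"
    proof
      fix z assume "z \<in> right_ideal_span F1 {?\<alpha>} \<inter> right_ideal_span F1 {?\<beta>}"
      then obtain y1 v y2 v' where "Some y1 \<in> right_ideal_span ?N {Some x}" "avoids_head i v"
        "z = Some (u @ (i, y1) # v)" "Some y2 \<in> right_ideal_span ?N {Some y}"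
        "z = Some (u @ (i, y2) # v')"
        unfolding Int_iff right_ideal_span_F1_word[OF a] right_ideal_span_F1_word[OF b] by blast
      then have z: "z = Some (u @ (i, y1) # v)" "avoids_head i v" "Some y1 \<in> right_ideal_span ?N Y"
        unfolding Y_eq[symmetric] by auto
      then obtain c p where c: "c \<in> Y" "p \<in> carrier ?N" "Some y1 = c \<otimes>\<^bsub>?N\<^esub> p"
        by (blast elim: right_ideal_spanE)
      obtain c0 where c0: "c = Some c0" "Some c0 \<in> right_ideal_span ?N {Some x}"
        using Y_Some[OF c(1)] by blast
      have "c0 \<in> carrier (S i)"
        using c0(2) right_ideal_span_right_ideal[OF N, of "{Some x}"] x
        unfolding right_ideal_def by auto
      then have a0: "u @ [(i, c0)] \<in> fp_carrier S I" by (rule fp_carrier_replace_last[OF a])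
      have "z \<in> right_ideal_span F1 {emb c}"
        unfolding emb_def c0(1) option.sel right_ideal_span_F1_word[OF a0]
        using z c c0(1) unfolding right_ideal_span_singleton by blast
      then show "z \<in> right_ideal_span F1 (emb ` Y)"
        using right_ideal_span_mono[of "{emb c}" "emb ` Y" F1] c(1) by blast
    qed
    have "right_ideal F1 (right_ideal_span F1 {?\<alpha>} \<inter> right_ideal_span F1 {?\<beta>})"
      using right_ideal_span_right_ideal[OF monoid_F1] a b by (simp add: right_ideal_Int Some_in_F1_iff)
    then show "right_ideal_span F1 (emb ` Y) \<subseteq> right_ideal_span F1 {?\<alpha>} \<inter> right_ideal_span F1 {?\<beta>}"
      using right_ideal_span_least[OF _ emb_\<alpha>\<beta>] by blast
  qed
  moreover have "emb ` Y \<subseteq> carrier F1"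
    using emb_\<alpha>\<beta> right_ideal_span_right_ideal[OF monoid_F1, of "{?\<alpha>}"] a
    unfolding right_ideal_def by (auto simp: Some_in_F1_iff)
  ultimately show ?thesis
    unfolding fg_principal_meet_def using Y(1) by blast
qed

lemma fg_principal_meet_F1_shorter_prefix:
  assumes a: "u @ [(i, x)] \<in> fp_carrier S I" and b: "u' @ [(j, y)] \<in> fp_carrier S I"
    and shorter: "length u < length u'"
  shows "fg_principal_meet F1 (Some (u @ [(i, x)])) (Some (u' @ [(j, y)]))"
proof -
  let ?N = "adjoin_one (S i)" and ?\<alpha> = "Some (u @ [(i, x)])" and ?\<beta> = "Some (u' @ [(j, y)])"
  show ?thesis
  proof (cases "\<exists>z r. u' = u @ (i, z) # r \<and> Some z \<in> right_ideal_span ?N {Some x}")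
    case True
    then obtain z r where u': "u' = u @ (i, z) # r" and z: "Some z \<in> right_ideal_span ?N {Some x}"
      by blast
    have "(i, z) # (r @ [(j, y)]) \<in> fp_carrier S I"
      using fp_carrier_suffix[of u "(i, z) # r @ [(j, y)]"] b u' by simp
    then have "avoids_head i (r @ [(j, y)])"
      using fp_carrier_tail unfolding avoids_head_def by fastforce
    then have "?\<beta> \<in> right_ideal_span F1 {?\<alpha>}"
      unfolding right_ideal_span_F1_word[OF a] using z u' by auto
    then have "right_ideal_span F1 {?\<beta>} \<subseteq> right_ideal_span F1 {?\<alpha>}"
      using right_ideal_span_singleton_subset[OF monoid_F1] a by (simp add: Some_in_F1_iff)
    moreover have "?\<beta> \<in> carrier F1" using b by (simp add: Some_in_F1_iff)
    ultimately show ?thesis by (intro fg_principal_meet_nested)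
  next
    case False
    have "right_ideal_span F1 {?\<alpha>} \<inter> right_ideal_span F1 {?\<beta>} = {}"
    proof (rule ccontr)
      assume "right_ideal_span F1 {?\<alpha>} \<inter> right_ideal_span F1 {?\<beta>} \<noteq> {}"
      then obtain z where "z \<in> right_ideal_span F1 {?\<alpha>}" "z \<in> right_ideal_span F1 {?\<beta>}" by blast
      then obtain y1 v y2 v' where y1: "Some y1 \<in> right_ideal_span ?N {Some x}"
        and "u @ (i, y1) # v = u' @ (j, y2) # v'"
        unfolding right_ideal_span_F1_word[OF a] right_ideal_span_F1_word[OF b] by auto
      then obtain us where "u @ us = u'" "(i, y1) # v = us @ (j, y2) # v'"
        using shorter by (auto simp: append_eq_append_conv2)
      moreover have "us \<noteq> []" using shorter \<open>u @ us = u'\<close> by auto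
      ultimately obtain r where "u' = u @ (i, y1) # r" by (cases us) auto
      then show False using False y1 by blast
    qed
    then show ?thesis by (rule fg_principal_meet_disjoint)
  qed
qed

lemma fg_principal_meet_F1_same_length:
  assumes a: "u @ [(i, x)] \<in> fp_carrier S I" and b: "u' @ [(j, y)] \<in> fp_carrier S I"
    and "length u = length u'" "u \<noteq> u' \<or> i \<noteq> j"
  shows "fg_principal_meet F1 (Some (u @ [(i, x)])) (Some (u' @ [(j, y)]))"
proof (rule fg_principal_meet_disjoint, rule ccontr)
  assume "right_ideal_span F1 {Some (u @ [(i, x)])} \<inter> right_ideal_span F1 {Some (u' @ [(j, y)])} \<noteq> {}"
  then obtain z where "z \<in> right_ideal_span F1 {Some (u @ [(i, x)])}"
    "z \<in> right_ideal_span F1 {Some (u' @ [(j, y)])}" by blast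
  then obtain y1 v y2 v' where "u @ (i, y1) # v = u' @ (j, y2) # v'"
    unfolding right_ideal_span_F1_word[OF a] right_ideal_span_F1_word[OF b] by auto
  then show False using assms(3,4) by simp
qed

lemma principal_right_ideal_Howson_F1:
  assumes H: "\<forall>i\<in>I. principal_right_ideal_Howson (adjoin_one (S i))"
  shows "principal_right_ideal_Howson F1"
  unfolding principal_right_ideal_Howson_def
proof (intro ballI)
  have None_top: "right_ideal_span F1 {b} \<subseteq> right_ideal_span F1 {None}" if "b \<in> carrier F1" for b
    using right_ideal_span_singleton_subset[OF monoid_F1 None_in_F1] that
      right_ideal_spanI[of None "{None}" b F1] by simp
  fix \<alpha> \<beta> assume \<alpha>: "\<alpha> \<in> carrier F1" and \<beta>: "\<beta> \<in> carrier F1"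
  show "fg_principal_meet F1 \<alpha> \<beta>"
  proof (cases "\<alpha> = None \<or> \<beta> = None")
    case True
    then show ?thesis
      using fg_principal_meet_nested None_top \<alpha> \<beta> fg_principal_meet_commute by metis
  next
    case False
    then obtain w w' where "\<alpha> = Some w" "\<beta> = Some w'" "w \<in> fp_carrier S I" "w' \<in> fp_carrier S I"
      using \<alpha> \<beta> Some_in_F1_iff by auto
    moreover obtain u i x where "w = u @ [(i, x)]" "i \<in> I"
      using \<open>w \<in> fp_carrier S I\<close> by (rule fp_carrier_snocE)
    moreover obtain u' j y where "w' = u' @ [(j, y)]"
      using \<open>w' \<in> fp_carrier S I\<close> by (rule fp_carrier_snocE)
    ultimately show ?thesis
      using fg_principal_meet_F1_same_prefix[of i u x y] fg_principal_meet_F1_same_length[of u i x u' j y]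
        fg_principal_meet_F1_shorter_prefix[of u i x u' j y] fg_principal_meet_F1_shorter_prefix[of u' j y u i x]
        fg_principal_meet_commute H
      by (metis linorder_neqE_nat)
  qed
qed

lemma weakly_right_coherent_F1:
  assumes "\<forall>i\<in>I. weakly_right_coherent (adjoin_one (S i))"
  shows "weakly_right_coherent F1"
proof -
  have "monoid (adjoin_one (S i))" if "i \<in> I" for i using semigroups that by (blast intro: monoid_adjoin_one)
  then show ?thesis
    using assms weakly_right_coherent_iff monoid_F1
      finitely_right_equated_F1 principal_right_ideal_Howson_F1 by metis
qed

end

lemma weakly_right_coherent_free_product:
  assumes S: "\<forall>i\<in>I. is_semigroup (S i)"
    and W: "\<forall>i\<in>I. weakly_right_coherent (adjoin_one (S i))"
  shows "weakly_right_coherent (adjoin_one (free_product S I))"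
proof (cases "\<exists>e. is_identity (free_product S I) e")
  case True
  then obtain e where e: "is_identity (free_product S I) e" ..
  then obtain k z where kz: "k \<in> I" "is_identity (S k) z" "\<forall>j\<in>I. j \<noteq> k \<longrightarrow> carrier (S j) = {}"
    by (rule free_product_identity)
  then show ?thesis
    using monoid_retract.weakly_right_coherent_retract[
        OF retract_free_product_with_identity(2)[OF S e kz]] W by blast
next
  case False
  then interpret free_product_without_identity S I using S by unfold_locales
  show ?thesis using W by (rule weakly_right_coherent_F1)
qed

theorem mainTheorem3:
  fixes S :: "'i \<Rightarrow> 'a monoid" and I :: "'i set"
  assumes "\<forall>i\<in>I. is_semigroup (S i)"
  shows "weakly_right_coherent (adjoin_one (free_product S I)) \<longleftrightarrow>
         (\<forall>i\<in>I. weakly_right_coherent (adjoin_one (S i)))"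
  using weakly_right_coherent_factor[OF assms] weakly_right_coherent_free_product[OF assms] by blast

end
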